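(* Let $\mathcal M$ be a $\Sigma$-module over a field $\mathbb F$ such that each $\mathcal M(n)$ has a basis $\mathcal B(n)$ stable under the action of $\Sigma_n$. For an object $(A,\beta)$ of $\beta(\mathcal M)$ set, for all ${\underline r}\in\mathrm{Comp}_p(n)$ and $[x]_{\underline r}\in\Sigma_{\underline r}\backslash\mathcal B(n)$, $\gamma_{[x]_{\underline r},{\underline r}}=\beta_{\mathscr O_{\Sigma_{\underline r}}([x]_{\underline r}),{\underline r}}$. Then $(A,\beta)\mapsto(A,\gamma)$ (identity on morphisms) defines a functor $P_{\mathcal M}:\beta(\mathcal M)\to\gamma(\mathcal M)$, and $P_{\mathcal M}$ is an isomorphism of categories.
   Context: $[n]=\{1,\dots,n\}$. A $\Sigma$-module is a sequence of $\mathbb F$-linear $\Sigma_n$-representations $\mathcal M(n)$. Compositions ${\underline r}=(r_1,\dots,r_p)\in\mathrm{Comp}_p(n)$ are tuples of nonnegative integers with sum $n$, identified with the partition of $[n]$ into consecutive intervals ${\underline r}_i$ of lengths $r_i$; $\Sigma_{\underline r}\subseteq\Sigma_n$ preserves each ${\underline r}_i$. For a group $H$ acting on a set, $[x]_H$, $\Omega_H(x)$, $\mathrm{Stab}_H(x)$ denote class, orbit, stabiliser; write $[x]_{\underline r},\mathrm{Stab}_{\underline r}$ for $H=\Sigma_{\underline r}$. $\mathscr O_{\Sigma_{\underline r}}([x]_{\underline r})=\sum_{y\in\Omega_{\Sigma_{\underline r}}(x)}y\in\mathcal M(n)^{\Sigma_{\underline r}}$. For $\rho\in\Sigma_p$: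 ${\underline r}^\rho=(r_{\rho^{-1}(1)},\dots,r_{\rho^{-1}(p)})$, $\rho^*\in\Sigma_n$ the block permutation with blocks of sizes $r_i$ associated to $\rho$. For ${\underline q}\in\mathrm{Comp}_s(p)$: ${\underline q}\rhd{\underline r}=(\sum_{i\in{\underline q}_1}r_i,\dots,\sum_{i\in{\underline q}_s}r_i)$. ${\underline r}\circ_1(l,m)=(l,m,r_2,\dots,r_p)$. Sums over $G/H$ are over left coset representatives. $\beta(\mathcal M)$: objects $(A,\beta)$ with $\beta_{x,{\underline r}}:A^{\times p}\to A$ for ${\underline r}\in\mathrm{Comp}_p(n)$, $x\in\mathcal M(n)^{\Sigma_{\underline r}}$, satisfying ($\beta$1) $\beta_{x,{\underline r}}(a_1,\dots,a_p)=\beta_{\rho^*\cdot x,{\underline r}^\rho}(a_{\rho^{-1}(1)},\dots,a_{\rho^{-1}(p)})$; ($\beta$2) $\beta_{x,(0,r_1,\dots,r_p)}(a_0,\dots,a_p)=\beta_{x,(r_1,\dots,r_p)}(a_1,\dots,a_p)$; ($\beta$3) $\beta_{x,{\underline r}}(\lambda a_1,a_2,\dots)=\lambda^{r_1}\beta_{x,{\underline r}}(a_1,a_2,\dots)$; ($\beta$4) for ${\underline q}\in\mathrm{Comp}_s(p)$, $\beta_{x,{\underline r}}$ at ($a_1$ repeated $q_1$ times, …, $a_s$ repeated $q_s$ times) equals $\beta_{\sum_{\sigma\in\Sigma_{{\underline q}\rhd{\underline r}}/\Sigma_{\underline r}}\sigma\cdot x,{\underline q}\rhd{\underline r}}(a_1,\dots,a_s)$;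 ($\beta$5) $\beta_{x,{\underline r}}(a_0+a_1,a_2,\dots)=\sum_{l+m=r_1}\beta_{x,{\underline r}\circ_1(l,m)}(a_0,a_1,a_2,\dots)$; ($\beta$6) $\beta_{\lambda x+y,{\underline r}}=\lambda\beta_{x,{\underline r}}+\beta_{y,{\underline r}}$. Morphisms: linear maps commuting with all operations. $\gamma(\mathcal M)$: objects $(A,\gamma)$ with $\gamma_{[x]_{\underline r},{\underline r}}:A^{\times p}\to A$ for ${\underline r}\in\mathrm{Comp}_p(n)$, $[x]_{\underline r}\in\Sigma_{\underline r}\backslash\mathcal B(n)$, satisfying ($\gamma$1) $\gamma_{[x]_{\underline r},{\underline r}}(a_1,\dots,a_p)=\gamma_{[\rho^*\cdot x]_{{\underline r}^\rho},{\underline r}^\rho}(a_{\rho^{-1}(1)},\dots,a_{\rho^{-1}(p)})$; ($\gamma$2) $\gamma_{[x]_{(0,{\underline r})},(0,{\underline r})}(a_0,a_1,\dots,a_p)=\gamma_{[x]_{\underline r},{\underline r}}(a_1,\dots,a_p)$; ($\gamma$3) $\gamma_{[x]_{\underline r},{\underline r}}(\lambda a_1,\dots)=\lambda^{r_1}\gamma_{[x]_{\underline r},{\underline r}}(a_1,\dots)$; ($\gamma$4) for ${\underline q}\in\mathrm{Comp}_s(p)$ and $x\in\mathcal B(n)$, $\gamma_{[x]_{\underline r},{\underline r}}$ at ($a_1$ repeated $q_1$ times, …, $a_s$ repeated $q_s$ times) equals $\frac{|\mathrm{Stab}_{{\underline q}\rhd{\underline r}}(x)|}{|\mathrm{Stab}_{\underline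 r}(x)|}\gamma_{[x]_{{\underline q}\rhd{\underline r}},{\underline q}\rhd{\underline r}}(a_1,\dots,a_s)$; ($\gamma$5) $\gamma_{[x]_{\underline r},{\underline r}}(a_0+a_1,a_2,\dots,a_p)=\sum_{l+m=r_1}\sum_{[y]\in\Sigma_{{\underline r}\circ_1(l,m)}\backslash\Omega_{\Sigma_{\underline r}}(x)}\gamma_{[y]_{{\underline r}\circ_1(l,m)},{\underline r}\circ_1(l,m)}(a_0,a_1,\dots,a_p)$. Morphisms: linear maps commuting with the operations. Integer coefficients are mapped into $\mathbb F$. *)

theory Defs
  imports Main "HOL.Vector_Spaces" "HOL-Combinatorics.Permutations"
begin

text \<open>Conventions: [n] is rendered 0-based as {..<n}; a composition r of n into p parts
  is a list of naturals of length p with sum n; its i-th block (0-based) is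
  the interval blk r i.  Tuples in A^p are lists of length p.\<close>

definition blk :: "nat list \<Rightarrow> nat \<Rightarrow> nat set" where
  "blk r i = {sum_list (take i r) ..< sum_list (take (Suc i) r)}"

definition SigmaC :: "nat list \<Rightarrow> (nat \<Rightarrow> nat) set" where
  "SigmaC r = {\<sigma>. \<sigma> permutes {..<sum_list r} \<and> (\<forall>i<length r. \<sigma> ` blk r i = blk r i)}"

definition orb :: "(nat \<Rightarrow> (nat \<Rightarrow> nat) \<Rightarrow> 'v \<Rightarrow> 'v) \<Rightarrow> nat list \<Rightarrow> 'v \<Rightarrow> 'v set" where
  "orb act r x = (\<lambda>\<sigma>. act (sum_list r) \<sigma> x) ` SigmaC r"

definition stab :: "(nat \<Rightarrow> (nat \<Rightarrow> nat) \<Rightarrow> 'v \<Rightarrow> 'v) \<Rightarrow> nat list \<Rightarrow> 'v \<Rightarrow> (nat \<Rightarrow> nat) set" where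
  "stab act r x = {\<sigma> \<in> SigmaC r. act (sum_list r) \<sigma> x = x}"

definition invs :: "(nat \<Rightarrow> 'v set) \<Rightarrow> (nat \<Rightarrow> (nat \<Rightarrow> nat) \<Rightarrow> 'v \<Rightarrow> 'v) \<Rightarrow> nat list \<Rightarrow> 'v set" where
  "invs Mn act r = {x \<in> Mn (sum_list r). \<forall>\<sigma>\<in>SigmaC r. act (sum_list r) \<sigma> x = x}"

definition classes :: "(nat \<Rightarrow> 'v set) \<Rightarrow> (nat \<Rightarrow> (nat \<Rightarrow> nat) \<Rightarrow> 'v \<Rightarrow> 'v) \<Rightarrow> nat list \<Rightarrow> 'v set set" where
  "classes B act r = {orb act r x | x. x \<in> B (sum_list r)}"

abbreviation cperm :: "(nat \<Rightarrow> nat) \<Rightarrow> 'a list \<Rightarrow> 'a list" where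
  "cperm \<rho> xs \<equiv> permute_list (inv \<rho>) xs"

text \<open>Block permutation rho^*: block i of r is moved, order preservingly, onto block rho(i) of r^rho.\<close>
definition blockperm :: "nat list \<Rightarrow> (nat \<Rightarrow> nat) \<Rightarrow> nat \<Rightarrow> nat" where
  "blockperm r \<rho> k =
     (if k < sum_list r then
        (let i = (THE i. i < length r \<and> k \<in> blk r i)
         in k - sum_list (take i r) + sum_list (take (\<rho> i) (cperm \<rho> r)))
      else k)"

definition coarsen :: "nat list \<Rightarrow> nat list \<Rightarrow> nat list" where
  "coarsen q r = map (\<lambda>j. sum_list (take (q ! j) (drop (sum_list (take j q)) r))) [0..<length q]"

definition rep :: "nat list \<Rightarrow> 'a list \<Rightarrow> 'a list" where
  "rep q as = concat (map (\<lambda>j. replicate (q ! j) (as ! j)) [0..<length q])"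

definition lcosets :: "(nat \<Rightarrow> nat) set \<Rightarrow> (nat \<Rightarrow> nat) set \<Rightarrow> (nat \<Rightarrow> nat) set set" where
  "lcosets G H = (\<lambda>\<sigma>. (\<lambda>\<tau>. \<sigma> \<circ> \<tau>) ` H) ` G"

text \<open>A Sigma-module (M(n) = subspace Mn n of an ambient F-vector space, with linear
  Sigma_n-action act n) whose components have Sigma_n-stable bases B n.\<close>
definition sigma_module_basis ::
  "('f::field \<Rightarrow> 'v::ab_group_add \<Rightarrow> 'v) \<Rightarrow> (nat \<Rightarrow> 'v set) \<Rightarrow> (nat \<Rightarrow> (nat \<Rightarrow> nat) \<Rightarrow> 'v \<Rightarrow> 'v)
    \<Rightarrow> (nat \<Rightarrow> 'v set) \<Rightarrow> bool" where
  "sigma_module_basis sM Mn act B \<longleftrightarrow>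
     vector_space sM \<and>
     (\<forall>n. module.subspace sM (Mn n)) \<and>
     (\<forall>n \<sigma>. \<sigma> permutes {..<n} \<longrightarrow>
        (\<forall>v\<in>Mn n. act n \<sigma> v \<in> Mn n) \<and>
        (\<forall>c v w. v \<in> Mn n \<and> w \<in> Mn n \<longrightarrow> act n \<sigma> (sM c v + w) = sM c (act n \<sigma> v) + act n \<sigma> w)) \<and>
     (\<forall>n. \<forall>v\<in>Mn n. act n id v = v) \<and>
     (\<forall>n \<sigma> \<tau>. \<sigma> permutes {..<n} \<and> \<tau> permutes {..<n} \<longrightarrow>
        (\<forall>v\<in>Mn n. act n (\<sigma> \<circ> \<tau>) v = act n \<sigma> (act n \<tau> v))) \<and>
     (\<forall>n. B n \<subseteq> Mn n \<and> \<not> module.dependent sM (B n) \<and> module.span sM (B n) = Mn n) \<and>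
     (\<forall>n \<sigma>. \<sigma> permutes {..<n} \<longrightarrow> act n \<sigma> ` B n \<subseteq> B n)"

text \<open>Objects of beta(M) with underlying vector space (UNIV, sA).  Operations are
  extensional: undefined outside their domain.\<close>
definition is_beta ::
  "('f::field \<Rightarrow> 'a::ab_group_add \<Rightarrow> 'a) \<Rightarrow> ('f \<Rightarrow> 'v::ab_group_add \<Rightarrow> 'v) \<Rightarrow> (nat \<Rightarrow> 'v set)
    \<Rightarrow> (nat \<Rightarrow> (nat \<Rightarrow> nat) \<Rightarrow> 'v \<Rightarrow> 'v) \<Rightarrow> ('v \<Rightarrow> nat list \<Rightarrow> 'a list \<Rightarrow> 'a) \<Rightarrow> bool" where
  "is_beta sA sM Mn act \<beta> \<longleftrightarrow>
     (\<forall>x r as. \<not> (x \<in> invs Mn act r \<and> length as = length r) \<longrightarrow> \<beta> x r as = undefined) \<and>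
     (\<forall>r x as \<rho>. x \<in> invs Mn act r \<and> length as = length r \<and> \<rho> permutes {..<length r} \<longrightarrow>
        \<beta> x r as = \<beta> (act (sum_list r) (blockperm r \<rho>) x) (cperm \<rho> r) (cperm \<rho> as)) \<and>
     (\<forall>r x a0 as. x \<in> invs Mn act (0 # r) \<and> length as = length r \<longrightarrow>
        \<beta> x (0 # r) (a0 # as) = \<beta> x r as) \<and>
     (\<forall>r x c a as. x \<in> invs Mn act r \<and> length (a # as) = length r \<longrightarrow>
        \<beta> x r (sA c a # as) = sA (c ^ hd r) (\<beta> x r (a # as))) \<and>
     (\<forall>r x q as. x \<in> invs Mn act r \<and> sum_list q = length r \<and> length as = length q \<longrightarrow>
        \<beta> x r (rep q as) =
          \<beta> (\<Sum>C\<in>lcosets (SigmaC (coarsen q r)) (SigmaC r). act (sum_list r) (SOME \<sigma>. \<sigma> \<in> C) x)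
            (coarsen q r) as) \<and>
     (\<forall>r x a0 a1 as. x \<in> invs Mn act r \<and> length (a1 # as) = length r \<longrightarrow>
        \<beta> x r ((a0 + a1) # as) =
          (\<Sum>l\<in>{..hd r}. \<beta> x (l # (hd r - l) # tl r) (a0 # a1 # as))) \<and>
     (\<forall>r x y c as. x \<in> invs Mn act r \<and> y \<in> invs Mn act r \<and> length as = length r \<longrightarrow>
        \<beta> (sM c x + y) r as = sA c (\<beta> x r as) + \<beta> y r as)"

text \<open>Objects of gamma(M) with underlying vector space (UNIV, sA); operations indexed
  by classes [x]_r (represented as the orbit sets), extensional.\<close>
definition is_gamma ::
  "('f::field \<Rightarrow> 'a::ab_group_add \<Rightarrow> 'a) \<Rightarrow> (nat \<Rightarrow> 'v set)
    \<Rightarrow> (nat \<Rightarrow> (nat \<Rightarrow> nat) \<Rightarrow> 'v \<Rightarrow> 'v) \<Rightarrow> ('v set \<Rightarrow> nat list \<Rightarrow> 'a list \<Rightarrow> 'a) \<Rightarrow> bool" where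
  "is_gamma sA B act \<gamma> \<longleftrightarrow>
     (\<forall>c r as. \<not> (c \<in> classes B act r \<and> length as = length r) \<longrightarrow> \<gamma> c r as = undefined) \<and>
     (\<forall>r x as \<rho>. x \<in> B (sum_list r) \<and> length as = length r \<and> \<rho> permutes {..<length r} \<longrightarrow>
        \<gamma> (orb act r x) r as =
          \<gamma> (orb act (cperm \<rho> r) (act (sum_list r) (blockperm r \<rho>) x)) (cperm \<rho> r) (cperm \<rho> as)) \<and>
     (\<forall>r x a0 as. x \<in> B (sum_list r) \<and> length as = length r \<longrightarrow>
        \<gamma> (orb act (0 # r) x) (0 # r) (a0 # as) = \<gamma> (orb act r x) r as) \<and>
     (\<forall>r x c a as. x \<in> B (sum_list r) \<and> length (a # as) = length r \<longrightarrow>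
        \<gamma> (orb act r x) r (sA c a # as) = sA (c ^ hd r) (\<gamma> (orb act r x) r (a # as))) \<and>
     (\<forall>r x q as. x \<in> B (sum_list r) \<and> sum_list q = length r \<and> length as = length q \<longrightarrow>
        \<gamma> (orb act r x) r (rep q as) =
          sA (of_nat (card (stab act (coarsen q r) x) div card (stab act r x)))
             (\<gamma> (orb act (coarsen q r) x) (coarsen q r) as)) \<and>
     (\<forall>r x a0 a1 as. x \<in> B (sum_list r) \<and> length (a1 # as) = length r \<longrightarrow>
        \<gamma> (orb act r x) r ((a0 + a1) # as) =
          (\<Sum>l\<in>{..hd r}. \<Sum>c\<in>{orb act (l # (hd r - l) # tl r) y | y. y \<in> orb act r x}.
              \<gamma> c (l # (hd r - l) # tl r) (a0 # a1 # as)))"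

definition beta_hom ::
  "('f::field \<Rightarrow> 'a::ab_group_add \<Rightarrow> 'a) \<Rightarrow> ('f \<Rightarrow> 'b::ab_group_add \<Rightarrow> 'b) \<Rightarrow> (nat \<Rightarrow> 'v set)
    \<Rightarrow> (nat \<Rightarrow> (nat \<Rightarrow> nat) \<Rightarrow> 'v \<Rightarrow> 'v) \<Rightarrow> ('v \<Rightarrow> nat list \<Rightarrow> 'a list \<Rightarrow> 'a)
    \<Rightarrow> ('v \<Rightarrow> nat list \<Rightarrow> 'b list \<Rightarrow> 'b) \<Rightarrow> ('a \<Rightarrow> 'b) \<Rightarrow> bool" where
  "beta_hom sA sB Mn act \<beta> \<beta>' f \<longleftrightarrow> Vector_Spaces.linear sA sB f \<and>
     (\<forall>x r as. x \<in> invs Mn act r \<and> length as = length r \<longrightarrow> f (\<beta> x r as) = \<beta>' x r (map f as))"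

definition gamma_hom ::
  "('f::field \<Rightarrow> 'a::ab_group_add \<Rightarrow> 'a) \<Rightarrow> ('f \<Rightarrow> 'b::ab_group_add \<Rightarrow> 'b) \<Rightarrow> (nat \<Rightarrow> 'v set)
    \<Rightarrow> (nat \<Rightarrow> (nat \<Rightarrow> nat) \<Rightarrow> 'v \<Rightarrow> 'v) \<Rightarrow> ('v set \<Rightarrow> nat list \<Rightarrow> 'a list \<Rightarrow> 'a)
    \<Rightarrow> ('v set \<Rightarrow> nat list \<Rightarrow> 'b list \<Rightarrow> 'b) \<Rightarrow> ('a \<Rightarrow> 'b) \<Rightarrow> bool" where
  "gamma_hom sA sB B act \<gamma> \<gamma>' f \<longleftrightarrow> Vector_Spaces.linear sA sB f \<and>
     (\<forall>c r as. c \<in> classes B act r \<and> length as = length r \<longrightarrow> f (\<gamma> c r as) = \<gamma>' c r (map f as))"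

text \<open>The functor P_M on objects: gamma_{[x]_r, r} = beta_{O([x]_r), r}, where O([x]_r) is
  the sum of the elements of the orbit.\<close>
definition P_M :: "(nat \<Rightarrow> 'v::ab_group_add set) \<Rightarrow> (nat \<Rightarrow> (nat \<Rightarrow> nat) \<Rightarrow> 'v \<Rightarrow> 'v)
    \<Rightarrow> ('v \<Rightarrow> nat list \<Rightarrow> 'a list \<Rightarrow> 'a) \<Rightarrow> ('v set \<Rightarrow> nat list \<Rightarrow> 'a list \<Rightarrow> 'a)" where
  "P_M B act \<beta> c r as =
     (if c \<in> classes B act r \<and> length as = length r then \<beta> (\<Sum>y\<in>c. y) r as else undefined)"

end

theory Submission
  imports Defs
begin

(* Since B(n) is stable under Sigma_n, the orbit sums O([x]_r) of the Sigma_r-orbits in B(n) form a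
   basis of the invariants M(n)^{Sigma_r}.  By (beta6) an operation beta_{x,r} is linear in x, so it
   is determined by its values on this basis, which are the operations gamma_{[x]_r,r}; conversely
   every family gamma extends linearly to a family beta, and morphisms correspond in the same way.
   On the basis each beta-axiom turns into the matching gamma-axiom thanks to three identities:
   rho^* O([x]_r) = O([rho^* x]_{r^rho}), the splitting of O([x]_r) into the orbit sums of the
   Sigma_{r o_1 (l,m)}-orbits it contains, and
     sum_{sigma in Sigma_{q |> r} / Sigma_r} sigma O([x]_r)
       = (|Stab_{q |> r}(x)| / |Stab_r(x)|) O([x]_{q |> r}),
   which follows by counting, through the bijection Sigma_{q |> r} / Sigma_r x Sigma_r = Sigma_{q |> r},
   how often each element of the larger orbit is hit. *)

section \<open>Compositions, Young subgroups and block permutations\<close>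

fun block_of :: "nat list \<Rightarrow> nat \<Rightarrow> nat" where
  "block_of [] k = 0"
| "block_of (a # r) k = (if k < a then 0 else Suc (block_of r (k - a)))"

lemma mem_blk_iff: "k \<in> blk r i \<longleftrightarrow> k < sum_list r \<and> block_of r k = i"
proof (induction r arbitrary: k i)
  case Nil
  then show ?case by (simp add: blk_def)
next
  case (Cons a r)
  show ?case
  proof (cases i)
    case 0
    then show ?thesis by (auto simp: blk_def)
  next
    case (Suc j)
    have "k \<in> blk (a # r) (Suc j) \<longleftrightarrow> a \<le> k \<and> k - a \<in> blk r j"
      by (auto simp: blk_def simp del: take_Suc)
    then show ?thesis using Cons.IH[of "k - a" j] Suc by auto
  qed
qed

lemma block_of_less: "k < sum_list r \<Longrightarrow> block_of r k < length r"
  by (induction r arbitrary: k) auto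

lemma block_of_drop:
  "a \<le> length r \<Longrightarrow> sum_list (take a r) \<le> k \<Longrightarrow>
   block_of r k = a + block_of (drop a r) (k - sum_list (take a r))"
proof (induction r arbitrary: a k)
  case (Cons x r)
  then show ?case by (cases a) (auto simp: diff_diff_add)
qed simp

lemma block_of_less_take: "k < sum_list (take a r) \<Longrightarrow> block_of r k < a"
proof (induction r arbitrary: a k)
  case (Cons x r)
  then show ?case by (cases a) (auto simp: less_diff_conv2)
qed simp

lemma coarsen_Cons: "coarsen (a # q) r = sum_list (take a r) # coarsen q (drop a r)"
  unfolding coarsen_def by (simp add: map_upt_Suc add.commute drop_drop del: upt_Suc)

lemma length_coarsen: "length (coarsen q r) = length q"
  by (simp add: coarsen_def)

lemma sum_list_take_drop: "sum_list (take a r) + sum_list (drop a r) = (sum_list r :: nat)"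
  by (metis append_take_drop_id sum_list_append)

lemma sum_list_coarsen: "sum_list q = length r \<Longrightarrow> sum_list (coarsen q r) = sum_list r"
proof (induction q arbitrary: r)
  case (Cons a q)
  then show ?case using sum_list_take_drop[of a r] by (simp add: coarsen_Cons)
qed (simp add: coarsen_def)

lemma block_of_coarsen:
  "sum_list q = length r \<Longrightarrow> k < sum_list r \<Longrightarrow> block_of (coarsen q r) k = block_of q (block_of r k)"
proof (induction q arbitrary: r k)
  case Nil
  then show ?case by (simp add: coarsen_def)
next
  case (Cons a q)
  show ?case
  proof (cases "k < sum_list (take a r)")
    case True
    then show ?thesis using block_of_less_take[OF True] by (simp add: coarsen_Cons)
  next
    case False
    then have "block_of r k = a + block_of (drop a r) (k - sum_list (take a r))"
      using block_of_drop Cons.prems by simp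
    then show ?thesis
      using Cons.IH[of "drop a r" "k - sum_list (take a r)"] Cons.prems False sum_list_take_drop[of a r]
      by (simp add: coarsen_Cons)
  qed
qed

lemma SigmaC_block_of:
  "SigmaC r = {\<sigma>. \<sigma> permutes {..<sum_list r} \<and> (\<forall>k<sum_list r. block_of r (\<sigma> k) = block_of r k)}"
proof safe
  fix \<sigma> assume s: "\<sigma> \<in> SigmaC r"
  then show "\<sigma> permutes {..<sum_list r}" by (simp add: SigmaC_def)
  fix k assume k: "k < sum_list r"
  then have "k \<in> blk r (block_of r k)" by (simp add: mem_blk_iff)
  then have "\<sigma> k \<in> \<sigma> ` blk r (block_of r k)" by blast
  also have "\<dots> = blk r (block_of r k)" using s block_of_less[OF k] by (simp add: SigmaC_def)
  finally show "block_of r (\<sigma> k) = block_of r k" by (simp add: mem_blk_iff)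
next
  fix \<sigma> assume p: "\<sigma> permutes {..<sum_list r}"
    and b: "\<forall>k<sum_list r. block_of r (\<sigma> k) = block_of r k"
  have "\<sigma> ` blk r i \<subseteq> blk r i" for i
    using b permutes_in_image[OF p] by (auto simp: mem_blk_iff)
  moreover have "blk r i \<subseteq> \<sigma> ` blk r i" for i
  proof
    fix k assume k: "k \<in> blk r i"
    have "inv \<sigma> k < sum_list r"
      using permutes_in_image[OF permutes_inv[OF p]] k by (simp add: mem_blk_iff)
    then have "inv \<sigma> k \<in> blk r i"
      using b k by (metis mem_blk_iff permutes_inverses(1)[OF p])
    then show "k \<in> \<sigma> ` blk r i" by (metis image_eqI permutes_inverses(1)[OF p])
  qed
  ultimately show "\<sigma> \<in> SigmaC r" using p by (simp add: SigmaC_def subset_antisym)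
qed

lemma SigmaC_permutes: "\<sigma> \<in> SigmaC r \<Longrightarrow> \<sigma> permutes {..<sum_list r}"
  by (simp add: SigmaC_def)

lemma id_in_SigmaC: "id \<in> SigmaC r"
  by (simp add: SigmaC_block_of permutes_id)

lemma comp_in_SigmaC: "\<sigma> \<in> SigmaC r \<Longrightarrow> \<tau> \<in> SigmaC r \<Longrightarrow> \<sigma> \<circ> \<tau> \<in> SigmaC r"
  unfolding SigmaC_block_of by (auto intro: permutes_compose dest: permutes_in_image)

lemma inv_in_SigmaC: "\<sigma> \<in> SigmaC r \<Longrightarrow> inv \<sigma> \<in> SigmaC r"
  unfolding SigmaC_block_of
proof safe
  assume p: "\<sigma> permutes {..<sum_list r}" and b: "\<forall>k<sum_list r. block_of r (\<sigma> k) = block_of r k"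
  show "inv \<sigma> permutes {..<sum_list r}" using permutes_inv[OF p] .
  fix k assume "k < sum_list r"
  then have "inv \<sigma> k < sum_list r" using permutes_in_image[OF permutes_inv[OF p]] by simp
  then show "block_of r (inv \<sigma> k) = block_of r k"
    using b by (metis permutes_inverses(1)[OF p])
qed

lemma comp_left_SigmaC: "\<sigma> \<in> SigmaC r \<Longrightarrow> (\<circ>) \<sigma> ` SigmaC r = SigmaC r"
proof (intro equalityI subsetI)
  fix \<tau> assume s: "\<sigma> \<in> SigmaC r" and t: "\<tau> \<in> SigmaC r"
  have "\<tau> = \<sigma> \<circ> (inv \<sigma> \<circ> \<tau>)"
    by (simp add: o_assoc permutes_inv_o(1)[OF SigmaC_permutes[OF s]])
  then show "\<tau> \<in> (\<circ>) \<sigma> ` SigmaC r" using comp_in_SigmaC[OF inv_in_SigmaC[OF s] t] by blast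
qed (auto intro: comp_in_SigmaC)

lemma comp_right_SigmaC: "\<sigma> \<in> SigmaC r \<Longrightarrow> (\<lambda>\<tau>. \<tau> \<circ> \<sigma>) ` SigmaC r = SigmaC r"
proof (intro equalityI subsetI)
  fix \<tau> assume s: "\<sigma> \<in> SigmaC r" and t: "\<tau> \<in> SigmaC r"
  have "\<tau> = (\<tau> \<circ> inv \<sigma>) \<circ> \<sigma>"
    by (simp add: comp_assoc permutes_inv_o(2)[OF SigmaC_permutes[OF s]])
  then show "\<tau> \<in> (\<lambda>\<tau>. \<tau> \<circ> \<sigma>) ` SigmaC r" using comp_in_SigmaC[OF t inv_in_SigmaC[OF s]] by blast
qed (auto intro: comp_in_SigmaC)

lemma finite_SigmaC: "finite (SigmaC r)"
  by (rule finite_subset[OF _ finite_permutations[of "{..<sum_list r}"]]) (auto simp: SigmaC_def)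

lemma SigmaC_subset_if_block_of:
  assumes "sum_list r' = sum_list r" "\<And>k. k < sum_list r \<Longrightarrow> block_of r k = g (block_of r' k)"
  shows "SigmaC r' \<subseteq> SigmaC r"
  unfolding SigmaC_block_of
proof safe
  fix \<sigma> assume p: "\<sigma> permutes {..<sum_list r'}"
    and b: "\<forall>k<sum_list r'. block_of r' (\<sigma> k) = block_of r' k"
  show "\<sigma> permutes {..<sum_list r}" using p assms(1) by simp
  fix k assume k: "k < sum_list r"
  have "\<sigma> k < sum_list r" using permutes_in_image[OF p] k assms(1) by simp
  then show "block_of r (\<sigma> k) = block_of r k" using assms b k by simp
qed

lemma SigmaC_subset_coarsen: "sum_list q = length r \<Longrightarrow> SigmaC r \<subseteq> SigmaC (coarsen q r)"
  by (rule SigmaC_subset_if_block_of[where g = "block_of q"])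
    (auto simp: sum_list_coarsen block_of_coarsen)

lemma SigmaC_Cons_0: "SigmaC (0 # r) = SigmaC r"
  by (intro equalityI SigmaC_subset_if_block_of[where g = "\<lambda>j. j - 1"]
      SigmaC_subset_if_block_of[where g = Suc]) auto

lemma SigmaC_split_head:
  assumes "r \<noteq> []" "l \<le> hd r"
  shows "SigmaC (l # (hd r - l) # tl r) \<subseteq> SigmaC r"
  using assms by (intro SigmaC_subset_if_block_of[where g = "\<lambda>j. j - 1"]) (cases r; auto)+

lemma sum_list_cperm: "\<rho> permutes {..<length r} \<Longrightarrow> sum_list (cperm \<rho> r) = sum_list (r :: nat list)"
  by (metis mset_permute_list permutes_inv sum_mset_sum_list)

lemma sum_list_take_Suc: "i < length xs \<Longrightarrow> sum_list (take (Suc i) xs) = sum_list (take i xs) + xs ! i"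
  by (simp add: take_Suc_conv_app_nth)

lemma blk_bounds: "k \<in> blk r i \<Longrightarrow> sum_list (take i r) \<le> k \<and> k < sum_list (take i r) + r ! i"
proof -
  assume k: "k \<in> blk r i"
  then have "i < length r" by (metis mem_blk_iff block_of_less)
  then show ?thesis using k by (simp add: blk_def sum_list_take_Suc)
qed

lemma the_block_index: "k < sum_list r \<Longrightarrow> (THE i. i < length r \<and> k \<in> blk r i) = block_of r k"
  by (rule the_equality) (auto simp: mem_blk_iff block_of_less)

lemma blockperm_eq:
  "k < sum_list r \<Longrightarrow> blockperm r \<rho> k =
     k - sum_list (take (block_of r k) r) + sum_list (take (\<rho> (block_of r k)) (cperm \<rho> r))"
  by (simp add: blockperm_def the_block_index Let_def)

lemma blockperm_blk:
  assumes p: "\<rho> permutes {..<length r}" and k: "k < sum_list r"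
  shows "blockperm r \<rho> k \<in> blk (cperm \<rho> r) (\<rho> (block_of r k))"
proof -
  let ?i = "block_of r k"
  have i: "?i < length r" using block_of_less[OF k] .
  have ri: "\<rho> ?i < length r" using permutes_in_image[OF p] i by simp
  have nth: "cperm \<rho> r ! (\<rho> ?i) = r ! ?i"
    using permute_list_nth[OF permutes_inv[OF p], of "\<rho> ?i"] ri by (simp add: permutes_inverses[OF p])
  have kb: "sum_list (take ?i r) \<le> k \<and> k < sum_list (take ?i r) + r ! ?i"
    using blk_bounds[of k r ?i] k by (simp add: mem_blk_iff)
  show ?thesis
    unfolding blockperm_eq[OF k] blk_def
    using kb sum_list_take_Suc[of "\<rho> ?i" "cperm \<rho> r"] ri nth by auto
qed

lemma block_of_blockperm:
  assumes p: "\<rho> permutes {..<length r}" and k: "k < sum_list r"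
  shows "block_of (cperm \<rho> r) (blockperm r \<rho> k) = \<rho> (block_of r k)"
    and "blockperm r \<rho> k < sum_list r"
  using blockperm_blk[OF p k] sum_list_cperm[OF p] by (auto simp: mem_blk_iff)

lemma blockperm_permutes:
  assumes p: "\<rho> permutes {..<length r}"
  shows "blockperm r \<rho> permutes {..<sum_list r}"
proof (rule bij_imp_permutes)
  let ?\<pi> = "blockperm r \<rho>"
  have inj: "inj_on ?\<pi> {..<sum_list r}"
  proof (rule inj_onI)
    fix k k' assume k: "k \<in> {..<sum_list r}" and k': "k' \<in> {..<sum_list r}" and e: "?\<pi> k = ?\<pi> k'"
    have "\<rho> (block_of r k) = \<rho> (block_of r k')" using block_of_blockperm(1)[OF p] k k' e by (metis lessThan_iff)
    then have b: "block_of r k = block_of r k'" using permutes_inj[OF p] by (meson injD)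
    have "sum_list (take (block_of r k) r) \<le> k" "sum_list (take (block_of r k') r) \<le> k'"
      using blk_bounds[of k r "block_of r k"] blk_bounds[of k' r "block_of r k'"] k k' by (auto simp: mem_blk_iff)
    then show "k = k'" using e b k k' by (simp add: blockperm_eq)
  qed
  have "?\<pi> ` {..<sum_list r} \<subseteq> {..<sum_list r}" using block_of_blockperm(2)[OF p] by auto
  then have "?\<pi> ` {..<sum_list r} = {..<sum_list r}" using endo_inj_surj inj by blast
  then show "bij_betw ?\<pi> {..<sum_list r} {..<sum_list r}" using inj by (simp add: bij_betw_def)
  show "\<And>x. x \<notin> {..<sum_list r} \<Longrightarrow> ?\<pi> x = x" by (simp add: blockperm_def)
qed

lemma blockperm_conj_SigmaC:
  assumes p: "\<rho> permutes {..<length r}" and s: "\<sigma> \<in> SigmaC r"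
  shows "blockperm r \<rho> \<circ> \<sigma> \<circ> inv (blockperm r \<rho>) \<in> SigmaC (cperm \<rho> r)"
proof -
  let ?\<pi> = "blockperm r \<rho>"
  have pp: "?\<pi> permutes {..<sum_list r}" using blockperm_permutes[OF p] .
  have sp: "\<sigma> permutes {..<sum_list r}" and sb: "\<forall>k<sum_list r. block_of r (\<sigma> k) = block_of r k"
    using s by (auto simp: SigmaC_block_of)
  show ?thesis unfolding SigmaC_block_of sum_list_cperm[OF p]
  proof (intro CollectI conjI allI impI)
    show "?\<pi> \<circ> \<sigma> \<circ> inv ?\<pi> permutes {..<sum_list r}"
      by (intro permutes_compose permutes_inv pp sp)
    fix k assume k: "k < sum_list r"
    define j where "j = inv ?\<pi> k"
    have j: "j < sum_list r" using permutes_in_image[OF permutes_inv[OF pp]] k by (simp add: j_def)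
    have kj: "k = ?\<pi> j" by (simp add: j_def permutes_inverses[OF pp])
    have sj: "\<sigma> j < sum_list r" using permutes_in_image[OF sp] j by simp
    have "block_of (cperm \<rho> r) ((?\<pi> \<circ> \<sigma> \<circ> inv ?\<pi>) k) = block_of (cperm \<rho> r) (?\<pi> (\<sigma> j))"
      by (simp add: j_def)
    also have "\<dots> = \<rho> (block_of r (\<sigma> j))" using block_of_blockperm(1)[OF p sj] .
    also have "\<dots> = \<rho> (block_of r j)" using sb j by simp
    also have "\<dots> = block_of (cperm \<rho> r) k" using block_of_blockperm(1)[OF p j] kj by simp
    finally show "block_of (cperm \<rho> r) ((?\<pi> \<circ> \<sigma> \<circ> inv ?\<pi>) k) = block_of (cperm \<rho> r) k" .
  qed
qed

lemma blockperm_conj_inv_SigmaC: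
  assumes p: "\<rho> permutes {..<length r}" and s: "\<tau> \<in> SigmaC (cperm \<rho> r)"
  shows "inv (blockperm r \<rho>) \<circ> \<tau> \<circ> blockperm r \<rho> \<in> SigmaC r"
proof -
  let ?\<pi> = "blockperm r \<rho>"
  have pp: "?\<pi> permutes {..<sum_list r}" using blockperm_permutes[OF p] .
  have sp: "\<tau> permutes {..<sum_list r}" and sb: "\<forall>k<sum_list r. block_of (cperm \<rho> r) (\<tau> k) = block_of (cperm \<rho> r) k"
    using s by (auto simp: SigmaC_block_of sum_list_cperm[OF p])
  show ?thesis unfolding SigmaC_block_of
  proof (intro CollectI conjI allI impI)
    show "inv ?\<pi> \<circ> \<tau> \<circ> ?\<pi> permutes {..<sum_list r}"
      by (intro permutes_compose permutes_inv pp sp)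
    fix k assume k: "k < sum_list r"
    define j where "j = inv ?\<pi> (\<tau> (?\<pi> k))"
    have pk: "?\<pi> k < sum_list r" using permutes_in_image[OF pp] k by simp
    have tk: "\<tau> (?\<pi> k) < sum_list r" using permutes_in_image[OF sp] pk by simp
    have j: "j < sum_list r" using permutes_in_image[OF permutes_inv[OF pp]] tk by (simp add: j_def)
    have pj: "?\<pi> j = \<tau> (?\<pi> k)" by (simp add: j_def permutes_inverses[OF pp])
    have "\<rho> (block_of r j) = block_of (cperm \<rho> r) (?\<pi> j)" using block_of_blockperm(1)[OF p j] by simp
    also have "\<dots> = block_of (cperm \<rho> r) (?\<pi> k)" using pj sb pk by simp
    also have "\<dots> = \<rho> (block_of r k)" using block_of_blockperm(1)[OF p k] .
    finally have "block_of r j = block_of r k" using permutes_inj[OF p] by (meson injD)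
    then show "block_of r ((inv ?\<pi> \<circ> \<tau> \<circ> ?\<pi>) k) = block_of r k" by (simp add: j_def)
  qed
qed

lemma sum_list_split_head:
  "r \<noteq> [] \<Longrightarrow> l \<le> hd r \<Longrightarrow> sum_list (l # (hd r - l) # tl r) = (sum_list r :: nat)"
  by (cases r) auto

lemma length_rep: "length (rep q as) = sum_list q"
  by (simp add: rep_def length_concat comp_def map_nth)

section \<open>Left cosets of Young subgroups\<close>

lemma inj_on_comp_left: "g permutes S \<Longrightarrow> inj_on ((\<circ>) g) A"
  by (metis (no_types, lifting) fun.map_comp inj_onI permutes_inv_o(2) id_comp)

lemma lcosets_rep:
  assumes HG: "SigmaC r \<subseteq> SigmaC r'" and C: "C \<in> lcosets (SigmaC r') (SigmaC r)" and g: "g \<in> C"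
  shows "C = (\<circ>) g ` SigmaC r" and "g \<in> SigmaC r'"
proof -
  obtain g0 where g0: "g0 \<in> SigmaC r'" "C = (\<circ>) g0 ` SigmaC r" using C by (auto simp: lcosets_def)
  then obtain h0 where h0: "h0 \<in> SigmaC r" "g = g0 \<circ> h0" using g by blast
  have "(\<circ>) g ` SigmaC r = (\<circ>) g0 ` ((\<circ>) h0 ` SigmaC r)" by (simp add: h0(2) image_image o_assoc)
  then show "C = (\<circ>) g ` SigmaC r" using comp_left_SigmaC[OF h0(1)] g0 by simp
  show "g \<in> SigmaC r'" using comp_in_SigmaC[OF g0(1)] h0 HG by blast
qed

lemma some_in_lcoset:
  assumes "C \<in> lcosets (SigmaC r') (SigmaC r)"
  shows "(SOME \<sigma>. \<sigma> \<in> C) \<in> C"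
proof -
  obtain g0 where "C = (\<circ>) g0 ` SigmaC r" using assms by (auto simp: lcosets_def)
  then have "g0 \<circ> id \<in> C" using id_in_SigmaC by blast
  then show ?thesis by (rule someI[where P = "\<lambda>\<sigma>. \<sigma> \<in> C"])
qed

lemma some_in_lcoset_SigmaC:
  "SigmaC r \<subseteq> SigmaC r' \<Longrightarrow> C \<in> lcosets (SigmaC r') (SigmaC r) \<Longrightarrow> (SOME \<sigma>. \<sigma> \<in> C) \<in> SigmaC r'"
  using lcosets_rep(2) some_in_lcoset by blast

lemma bij_betw_lcosets_times_SigmaC:
  assumes HG: "SigmaC r \<subseteq> SigmaC r'"
  shows "bij_betw (\<lambda>(C, h). (SOME \<sigma>. \<sigma> \<in> C) \<circ> h) (lcosets (SigmaC r') (SigmaC r) \<times> SigmaC r) (SigmaC r')"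
proof (rule bij_betw_imageI)
  let ?L = "lcosets (SigmaC r') (SigmaC r)" and ?s = "\<lambda>C. SOME \<sigma>. \<sigma> \<in> C"
  have mem: "?s C \<circ> h \<in> C" if "C \<in> ?L" "h \<in> SigmaC r" for C h
    using lcosets_rep(1)[OF HG that(1) some_in_lcoset[OF that(1)]] that(2) by blast
  show "inj_on (\<lambda>(C, h). ?s C \<circ> h) (?L \<times> SigmaC r)"
  proof (rule inj_onI, clarsimp)
    fix C h C' h' assume C: "C \<in> ?L" "h \<in> SigmaC r" and C': "C' \<in> ?L" "h' \<in> SigmaC r"
      and e: "?s C \<circ> h = ?s C' \<circ> h'"
    have "C = C'"
      using lcosets_rep(1)[OF HG C(1) mem[OF C]] lcosets_rep(1)[OF HG C'(1) mem[OF C']] e by simp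
    moreover have "?s C permutes {..<sum_list r'}"
      using SigmaC_permutes some_in_lcoset_SigmaC[OF HG C(1)] by blast
    ultimately show "C = C' \<and> h = h'" using e inj_onD[OF inj_on_comp_left] by blast
  qed
  show "(\<lambda>(C, h). ?s C \<circ> h) ` (?L \<times> SigmaC r) = SigmaC r'"
  proof (intro equalityI subsetI)
    fix g assume "g \<in> (\<lambda>(C, h). ?s C \<circ> h) ` (?L \<times> SigmaC r)"
    then show "g \<in> SigmaC r'"
      using some_in_lcoset_SigmaC[OF HG] HG by (auto intro: comp_in_SigmaC)
  next
    fix g assume g: "g \<in> SigmaC r'"
    define C where "C = (\<circ>) g ` SigmaC r"
    have C: "C \<in> ?L" using g by (auto simp: C_def lcosets_def)
    then obtain h0 where h0: "h0 \<in> SigmaC r" "?s C = g \<circ> h0"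
      using some_in_lcoset[OF C] by (auto simp: C_def)
    have "g = ?s C \<circ> inv h0"
      using h0 permutes_inv_o(1)[OF SigmaC_permutes[OF h0(1)]] by (simp add: comp_assoc)
    then show "g \<in> (\<lambda>(C, h). ?s C \<circ> h) ` (?L \<times> SigmaC r)"
      using C inv_in_SigmaC[OF h0(1)] by force
  qed
qed

section \<open>Orbit sums in a Sigma-module with a stable basis\<close>

definition orbit_sum :: "'v::ab_group_add set \<Rightarrow> 'v" where
  "orbit_sum c = (\<Sum>y\<in>c. y)"

lemma P_M_eq:
  "c \<in> classes B act r \<Longrightarrow> length as = length r \<Longrightarrow> P_M B act \<beta> c r as = \<beta> (orbit_sum c) r as"
  by (simp add: P_M_def orbit_sum_def)

locale sigma_module =
  fixes sM :: "'f::field \<Rightarrow> 'v::ab_group_add \<Rightarrow> 'v"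
    and Mn B :: "nat \<Rightarrow> 'v set"
    and act :: "nat \<Rightarrow> (nat \<Rightarrow> nat) \<Rightarrow> 'v \<Rightarrow> 'v"
  assumes sigma_module_basis: "sigma_module_basis sM Mn act B"
begin

sublocale M: vector_space sM
  using sigma_module_basis by (simp add: sigma_module_basis_def)

lemma subspace_Mn: "M.subspace (Mn n)"
  and act_in_Mn: "\<sigma> permutes {..<n} \<Longrightarrow> v \<in> Mn n \<Longrightarrow> act n \<sigma> v \<in> Mn n"
  and act_linear: "\<sigma> permutes {..<n} \<Longrightarrow> v \<in> Mn n \<Longrightarrow> w \<in> Mn n \<Longrightarrow>
    act n \<sigma> (sM c v + w) = sM c (act n \<sigma> v) + act n \<sigma> w"
  and act_id: "v \<in> Mn n \<Longrightarrow> act n id v = v"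
  and act_comp: "\<sigma> permutes {..<n} \<Longrightarrow> \<tau> permutes {..<n} \<Longrightarrow> v \<in> Mn n \<Longrightarrow>
    act n (\<sigma> \<circ> \<tau>) v = act n \<sigma> (act n \<tau> v)"
  and B_subset_Mn: "B n \<subseteq> Mn n"
  and independent_B: "M.independent (B n)"
  and span_B: "M.span (B n) = Mn n"
  using sigma_module_basis by (simp_all add: sigma_module_basis_def)

lemma act_in_B: "\<sigma> permutes {..<n} \<Longrightarrow> b \<in> B n \<Longrightarrow> act n \<sigma> b \<in> B n"
  using sigma_module_basis unfolding sigma_module_basis_def by blast

lemma B_in_Mn: "b \<in> B n \<Longrightarrow> b \<in> Mn n"
  using B_subset_Mn by blast

lemma act_add: "\<sigma> permutes {..<n} \<Longrightarrow> v \<in> Mn n \<Longrightarrow> w \<in> Mn n \<Longrightarrow>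
    act n \<sigma> (v + w) = act n \<sigma> v + act n \<sigma> w"
  using act_linear[of \<sigma> n v w 1] by simp

lemma act_zero: "\<sigma> permutes {..<n} \<Longrightarrow> act n \<sigma> 0 = 0"
  using act_add[of \<sigma> n 0 0] M.subspace_0[OF subspace_Mn] by simp

lemma act_scale: "\<sigma> permutes {..<n} \<Longrightarrow> v \<in> Mn n \<Longrightarrow> act n \<sigma> (sM c v) = sM c (act n \<sigma> v)"
  using act_linear[of \<sigma> n v 0 c] M.subspace_0[OF subspace_Mn] by (simp add: act_zero)

lemma act_sum: "\<sigma> permutes {..<n} \<Longrightarrow> (\<And>i. i \<in> I \<Longrightarrow> f i \<in> Mn n) \<Longrightarrow>
    act n \<sigma> (sum f I) = (\<Sum>i\<in>I. act n \<sigma> (f i))"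
proof (induction I rule: infinite_finite_induct)
  case (insert x F)
  then show ?case by (simp add: act_add M.subspace_sum[OF subspace_Mn])
qed (simp_all add: act_zero)

lemma act_inv_act: "\<sigma> permutes {..<n} \<Longrightarrow> v \<in> Mn n \<Longrightarrow> act n (inv \<sigma>) (act n \<sigma> v) = v"
  using act_comp[of "inv \<sigma>" n \<sigma> v] permutes_inv[of \<sigma>] permutes_inv_o(2)[of \<sigma>] act_id by simp

lemma act_act_inv: "\<sigma> permutes {..<n} \<Longrightarrow> v \<in> Mn n \<Longrightarrow> act n \<sigma> (act n (inv \<sigma>) v) = v"
  using act_comp[of \<sigma> n "inv \<sigma>" v] permutes_inv[of \<sigma>] permutes_inv_o(1)[of \<sigma>] act_id by simp

lemma inj_on_act: "\<sigma> permutes {..<n} \<Longrightarrow> inj_on (act n \<sigma>) (Mn n)"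
  by (metis act_inv_act inj_onI)

lemma act_orbit_sum:
  assumes "\<sigma> permutes {..<n}" and "c \<subseteq> Mn n"
  shows "act n \<sigma> (orbit_sum c) = orbit_sum (act n \<sigma> ` c)"
proof -
  have "act n \<sigma> (orbit_sum c) = (\<Sum>y\<in>c. act n \<sigma> y)"
    unfolding orbit_sum_def using assms by (intro act_sum) blast+
  also have "\<dots> = orbit_sum (act n \<sigma> ` c)" unfolding orbit_sum_def
    by (rule sum.reindex[symmetric, unfolded comp_def]) (rule inj_on_subset[OF inj_on_act] assms)+
  finally show ?thesis .
qed

lemma orb_subset_B: "x \<in> B (sum_list r) \<Longrightarrow> orb act r x \<subseteq> B (sum_list r)"
  unfolding orb_def using act_in_B SigmaC_permutes by blast

lemma finite_orb: "finite (orb act r x)"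
  unfolding orb_def using finite_SigmaC by simp

lemma self_in_orb: "x \<in> Mn (sum_list r) \<Longrightarrow> x \<in> orb act r x"
  unfolding orb_def using id_in_SigmaC act_id by (metis image_eqI)

lemma act_image_orb:
  assumes "x \<in> Mn (sum_list r)" and "\<sigma> \<in> SigmaC r"
  shows "act (sum_list r) \<sigma> ` orb act r x = orb act r x"
proof -
  have "act (sum_list r) \<sigma> ` orb act r x = (\<lambda>\<tau>. act (sum_list r) (\<sigma> \<circ> \<tau>) x) ` SigmaC r"
    unfolding orb_def image_image using assms
    by (intro image_cong refl) (simp add: act_comp SigmaC_permutes)
  also have "\<dots> = (\<lambda>\<tau>. act (sum_list r) \<tau> x) ` ((\<circ>) \<sigma> ` SigmaC r)"
    by (simp only: image_image)
  finally show ?thesis by (simp only: comp_left_SigmaC[OF assms(2)] orb_def)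
qed

lemma orb_eq_if_mem:
  assumes "x \<in> Mn (sum_list r)" and "y \<in> orb act r x"
  shows "orb act r y = orb act r x"
proof -
  obtain \<sigma> where \<sigma>: "\<sigma> \<in> SigmaC r" "y = act (sum_list r) \<sigma> x"
    using assms(2) by (auto simp: orb_def)
  have "orb act r y = (\<lambda>\<tau>. act (sum_list r) (\<tau> \<circ> \<sigma>) x) ` SigmaC r"
    unfolding orb_def using assms(1) \<sigma>
    by (intro image_cong refl) (simp add: act_comp SigmaC_permutes)
  also have "\<dots> = (\<lambda>\<tau>. act (sum_list r) \<tau> x) ` ((\<lambda>\<tau>. \<tau> \<circ> \<sigma>) ` SigmaC r)"
    by (simp only: image_image)
  finally show ?thesis by (simp only: comp_right_SigmaC[OF \<sigma>(1)] orb_def)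
qed

lemma class_subset_B: "c \<in> classes B act r \<Longrightarrow> c \<subseteq> B (sum_list r)"
  using orb_subset_B by (auto simp: classes_def)

lemma finite_class: "c \<in> classes B act r \<Longrightarrow> finite c"
  using finite_orb by (auto simp: classes_def)

lemma orb_in_classes: "x \<in> B (sum_list r) \<Longrightarrow> orb act r x \<in> classes B act r"
  by (auto simp: classes_def)

lemma class_eq_orb:
  assumes "c \<in> classes B act r" and "b \<in> c"
  shows "c = orb act r b"
proof -
  obtain x where "x \<in> B (sum_list r)" "c = orb act r x" using assms(1) by (auto simp: classes_def)
  then show ?thesis using orb_eq_if_mem[OF B_in_Mn] assms(2) by simp
qed

lemma classes_disjoint: "c \<in> classes B act r \<Longrightarrow> c' \<in> classes B act r \<Longrightarrow> b \<in> c \<Longrightarrow> b \<in> c' \<Longrightarrow> c = c'"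
  using class_eq_orb by metis

lemma subspace_invs: "M.subspace (invs Mn act r)"
  using M.subspace_0[OF subspace_Mn] M.subspace_add[OF subspace_Mn] M.subspace_scale[OF subspace_Mn]
  unfolding M.subspace_def invs_def by (auto simp: act_zero act_add act_scale SigmaC_permutes)

lemma orbit_sum_in_invs: "c \<in> classes B act r \<Longrightarrow> orbit_sum c \<in> invs Mn act r"
proof -
  assume c: "c \<in> classes B act r"
  have cM: "c \<subseteq> Mn (sum_list r)" using class_subset_B[OF c] B_subset_Mn by blast
  have "act (sum_list r) \<sigma> (orbit_sum c) = orbit_sum c" if "\<sigma> \<in> SigmaC r" for \<sigma>
    using c that act_orbit_sum[OF SigmaC_permutes cM] act_image_orb B_in_Mn
    by (auto simp: classes_def)
  moreover have "orbit_sum c \<in> Mn (sum_list r)"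
    unfolding orbit_sum_def using cM by (intro M.subspace_sum[OF subspace_Mn]) blast
  ultimately show ?thesis by (simp add: invs_def)
qed

lemma representation_act:
  assumes p: "\<sigma> permutes {..<n}" and x: "x \<in> Mn n"
  shows "M.representation (B n) (act n \<sigma> x) =
    (\<lambda>b. if b \<in> B n then M.representation (B n) x (act n (inv \<sigma>) b) else 0)"
    (is "_ = ?f")
proof (rule M.representation_eqI[OF independent_B])
  let ?R = "M.representation (B n) x"
  show "act n \<sigma> x \<in> M.span (B n)" using act_in_Mn[OF p x] span_B by simp
  have supp: "{b. ?f b \<noteq> 0} = act n \<sigma> ` {b. ?R b \<noteq> 0}"
  proof (intro equalityI subsetI)
    fix b assume "b \<in> {b. ?f b \<noteq> 0}"
    then have b: "b \<in> B n" "?R (act n (inv \<sigma>) b) \<noteq> 0" by (auto split: if_splits)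
    then show "b \<in> act n \<sigma> ` {b. ?R b \<noteq> 0}"
      using act_act_inv[OF p B_in_Mn[OF b(1)]] by (metis (mono_tags, lifting) image_eqI mem_Collect_eq)
  next
    fix b assume "b \<in> act n \<sigma> ` {b. ?R b \<noteq> 0}"
    then obtain b0 where b0: "?R b0 \<noteq> 0" "b = act n \<sigma> b0" by blast
    have "b0 \<in> B n" using M.representation_ne_zero[OF b0(1)] .
    then show "b \<in> {b. ?f b \<noteq> 0}"
      using b0 act_in_B[OF p] act_inv_act[OF p B_in_Mn] by simp
  qed
  have injR: "inj_on (act n \<sigma>) {b. ?R b \<noteq> 0}"
    by (rule inj_on_subset[OF inj_on_act[OF p]]) (use M.representation_ne_zero B_in_Mn in blast)
  show "?f b \<noteq> 0 \<Longrightarrow> b \<in> B n" for b by (simp split: if_splits)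
  show "finite {b. ?f b \<noteq> 0}" unfolding supp using M.finite_representation by simp
  have "(\<Sum>b | ?f b \<noteq> 0. sM (?f b) b) = (\<Sum>b | ?R b \<noteq> 0. sM (?f (act n \<sigma> b)) (act n \<sigma> b))"
    unfolding supp by (rule sum.reindex[OF injR, unfolded comp_def])
  also have "\<dots> = (\<Sum>b | ?R b \<noteq> 0. act n \<sigma> (sM (?R b) b))"
  proof (rule sum.cong[OF refl])
    fix b assume "b \<in> {b. ?R b \<noteq> 0}"
    then have b: "b \<in> B n" using M.representation_ne_zero by blast
    show "sM (?f (act n \<sigma> b)) (act n \<sigma> b) = act n \<sigma> (sM (?R b) b)"
      using act_in_B[OF p b] act_inv_act[OF p B_in_Mn[OF b]] act_scale[OF p B_in_Mn[OF b]] by simp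
  qed
  also have "\<dots> = act n \<sigma> (\<Sum>b | ?R b \<noteq> 0. sM (?R b) b)"
    by (rule act_sum[OF p, symmetric])
      (use M.representation_ne_zero B_in_Mn M.subspace_scale[OF subspace_Mn] in blast)
  also have "\<dots> = act n \<sigma> x"
    using M.sum_nonzero_representation_eq[OF independent_B] x span_B by simp
  finally show "(\<Sum>b | ?f b \<noteq> 0. sM (?f b) b) = act n \<sigma> x" .
qed

lemma representation_constant_on_orb:
  assumes x: "x \<in> invs Mn act r" and b0: "b0 \<in> B (sum_list r)" and b: "b \<in> orb act r b0"
  shows "M.representation (B (sum_list r)) x b = M.representation (B (sum_list r)) x b0"
proof -
  let ?n = "sum_list r"
  obtain \<sigma> where \<sigma>: "\<sigma> \<in> SigmaC r" "b = act ?n \<sigma> b0" using b by (auto simp: orb_def)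
  have p: "inv \<sigma> permutes {..<?n}" using permutes_inv[OF SigmaC_permutes[OF \<sigma>(1)]] .
  have "M.representation (B ?n) x b0 = M.representation (B ?n) (act ?n (inv \<sigma>) x) b0"
    using x inv_in_SigmaC[OF \<sigma>(1)] by (simp add: invs_def)
  also have "\<dots> = M.representation (B ?n) x (act ?n \<sigma> b0)"
    using representation_act[OF p, of x] x b0 permutes_inv_inv[OF SigmaC_permutes[OF \<sigma>(1)]]
    by (simp add: invs_def)
  finally show ?thesis using \<sigma>(2) by simp
qed

lemma representation_orbit_sum:
  assumes c: "c \<in> classes B act r"
  shows "M.representation (B (sum_list r)) (orbit_sum c) = (\<lambda>b. if b \<in> c then 1 else 0)"
proof (rule M.representation_eqI[OF independent_B])
  have e: "{b. (if b \<in> c then 1 else (0::'f)) \<noteq> 0} = c" by auto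
  show "orbit_sum c \<in> M.span (B (sum_list r))"
    using orbit_sum_in_invs[OF c] span_B by (simp add: invs_def)
  show "(if b \<in> c then 1 else 0) \<noteq> 0 \<Longrightarrow> b \<in> B (sum_list r)" for b
    using class_subset_B[OF c] by (auto split: if_splits)
  show "finite {b. (if b \<in> c then 1 else (0::'f)) \<noteq> 0}" unfolding e using finite_class[OF c] .
  show "(\<Sum>b | (if b \<in> c then 1 else (0::'f)) \<noteq> 0. sM (if b \<in> c then 1 else 0) b) = orbit_sum c"
    unfolding e orbit_sum_def by (rule sum.cong) auto
qed

lemma inj_on_orbit_sum: "inj_on orbit_sum (classes B act r)"
proof (rule inj_onI)
  fix c c' assume c: "c \<in> classes B act r" and c': "c' \<in> classes B act r"
    and "orbit_sum c = orbit_sum c'"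
  then have "(\<lambda>b. if b \<in> c then 1 else (0::'f)) = (\<lambda>b. if b \<in> c' then 1 else 0)"
    using representation_orbit_sum[OF c] representation_orbit_sum[OF c'] by simp
  then show "c = c'" by (auto simp: fun_eq_iff split: if_splits)
qed

lemma independent_orbit_sums: "M.independent (orbit_sum ` classes B act r)"
  unfolding M.independent_explicit_module
proof (intro allI impI)
  fix t u v assume t: "finite t" "t \<subseteq> orbit_sum ` classes B act r"
    and z: "(\<Sum>v\<in>t. sM (u v) v) = 0" and v: "v \<in> t"
  let ?R = "M.representation (B (sum_list r))"
  obtain c0 where c0: "c0 \<in> classes B act r" "v = orbit_sum c0" using v t by blast
  obtain b0 where b0: "b0 \<in> c0" using c0(1) self_in_orb B_in_Mn by (fastforce simp: classes_def)
  have span: "w \<in> M.span (B (sum_list r))" if "w \<in> t" for w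
    using t that orbit_sum_in_invs span_B by (auto simp: invs_def)
  have "?R (\<Sum>v\<in>t. sM (u v) v) b0 = (\<Sum>w\<in>t. u w * ?R w b0)"
    using M.representation_sum[OF independent_B, of t "\<lambda>w. sM (u w) w"] span
      M.representation_scale[OF independent_B] M.span_scale by simp
  also have "\<dots> = (\<Sum>w\<in>t. if w = v then u w else 0)"
  proof (rule sum.cong[OF refl])
    fix w assume w: "w \<in> t"
    then obtain c where c: "c \<in> classes B act r" "w = orbit_sum c" using t by blast
    have "b0 \<in> c \<longleftrightarrow> w = v"
      using classes_disjoint[OF c(1) c0(1) _ b0] c c0 b0 inj_onD[OF inj_on_orbit_sum _ c(1) c0(1)]
      by auto
    then show "u w * ?R w b0 = (if w = v then u w else 0)"
      using representation_orbit_sum[OF c(1)] c(2) by simp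
  qed
  also have "\<dots> = u v" using v t by (simp add: sum.delta')
  finally show "u v = 0" using z M.representation_zero by simp
qed

lemma invs_eq_span_orbit_sums: "invs Mn act r = M.span (orbit_sum ` classes B act r)"
proof
  show "M.span (orbit_sum ` classes B act r) \<subseteq> invs Mn act r"
    using M.span_minimal[OF _ subspace_invs] orbit_sum_in_invs by blast
  show "invs Mn act r \<subseteq> M.span (orbit_sum ` classes B act r)"
  proof
    fix x assume x: "x \<in> invs Mn act r"
    let ?n = "sum_list r"
    let ?R = "M.representation (B ?n) x"
    define supp where "supp = {b. ?R b \<noteq> 0}"
    define C where "C = orb act r ` supp"
    have supp_B: "supp \<subseteq> B ?n" using M.representation_ne_zero by (auto simp: supp_def)
    have C_classes: "C \<subseteq> classes B act r" using supp_B by (auto simp: C_def classes_def)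
    have finite_C: "finite C" using M.finite_representation by (simp add: C_def supp_def)
    have supp_Union: "supp \<subseteq> \<Union>C" using self_in_orb supp_B B_in_Mn by (fastforce simp: C_def)
    have "x = (\<Sum>b\<in>supp. sM (?R b) b)"
      using M.sum_nonzero_representation_eq[OF independent_B] x span_B
      by (simp add: supp_def invs_def)
    also have "\<dots> = (\<Sum>b\<in>\<Union>C. sM (?R b) b)"
      using finite_C C_classes finite_class supp_Union
      by (intro sum.mono_neutral_left) (auto simp: supp_def)
    also have "\<dots> = (\<Sum>c\<in>C. \<Sum>b\<in>c. sM (?R b) b)"
      by (rule sum.Union_disjoint[unfolded comp_def])
        (use C_classes finite_class classes_disjoint in blast)+
    also have "\<dots> \<in> M.span (orbit_sum ` classes B act r)"
    proof (rule M.span_sum)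
      fix c assume c: "c \<in> C"
      then obtain b0 where b0: "b0 \<in> supp" "c = orb act r b0" by (auto simp: C_def)
      have "(\<Sum>b\<in>c. sM (?R b) b) = (\<Sum>b\<in>c. sM (?R b0) b)"
        using representation_constant_on_orb[OF x] b0 supp_B by (intro sum.cong) auto
      also have "\<dots> = sM (?R b0) (orbit_sum c)" by (simp add: orbit_sum_def M.scale_sum_right)
      finally show "(\<Sum>b\<in>c. sM (?R b) b) \<in> M.span (orbit_sum ` classes B act r)"
        using c C_classes M.span_scale M.span_base by (metis image_eqI subsetD)
    qed
    finally show "x \<in> M.span (orbit_sum ` classes B act r)" .
  qed
qed

lemma invs_induct[consumes 1, case_names zero orbit_sum]:
  assumes "x \<in> invs Mn act r" and "P 0"
    and "\<And>c u y. c \<in> classes B act r \<Longrightarrow> y \<in> invs Mn act r \<Longrightarrow> P y \<Longrightarrow> P (sM u (orbit_sum c) + y)"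
  shows "P x"
proof -
  have "x \<in> M.span (orbit_sum ` classes B act r)" using assms(1) invs_eq_span_orbit_sums by simp
  then have "x \<in> invs Mn act r \<and> P x"
  proof (induction rule: M.span_induct_alt)
    case base
    then show ?case using assms(2) M.subspace_0[OF subspace_invs] by simp
  next
    case (step u v y)
    then obtain c where "c \<in> classes B act r" "v = orbit_sum c" by blast
    then show ?case
      using step assms(3) orbit_sum_in_invs
        M.subspace_add[OF subspace_invs] M.subspace_scale[OF subspace_invs] by blast
  qed
  then show ?thesis by simp
qed

lemma linear_on_invs_eqI:
  fixes F G :: "'v \<Rightarrow> 'a::ab_group_add"
  assumes "vector_space sA" and x: "x \<in> invs Mn act r"
    and F: "\<And>c x y. x \<in> invs Mn act r \<Longrightarrow> y \<in> invs Mn act r \<Longrightarrow> F (sM c x + y) = sA c (F x) + F y"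
    and G: "\<And>c x y. x \<in> invs Mn act r \<Longrightarrow> y \<in> invs Mn act r \<Longrightarrow> G (sM c x + y) = sA c (G x) + G y"
    and eq: "\<And>c. c \<in> classes B act r \<Longrightarrow> F (orbit_sum c) = G (orbit_sum c)"
  shows "F x = G x"
proof -
  interpret A: vector_space sA by fact
  have 0: "0 \<in> invs Mn act r" using M.subspace_0[OF subspace_invs] .
  have "F 0 = 0" "G 0 = 0" using F[OF 0 0, of 1] G[OF 0 0, of 1] by simp_all
  with x show ?thesis
    by (induction rule: invs_induct) (simp_all add: F G eq orbit_sum_in_invs)
qed

lemma act_blockperm_orb:
  assumes p: "\<rho> permutes {..<length r}" and x: "x \<in> Mn (sum_list r)"
  shows "act (sum_list r) (blockperm r \<rho>) ` orb act r x
    = orb act (cperm \<rho> r) (act (sum_list r) (blockperm r \<rho>) x)"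
proof -
  let ?n = "sum_list r" and ?\<pi> = "blockperm r \<rho>"
  have pp: "?\<pi> permutes {..<?n}" using blockperm_permutes[OF p] .
  have conj: "act ?n ?\<pi> (act ?n \<sigma> x) = act ?n (?\<pi> \<circ> \<sigma> \<circ> inv ?\<pi>) (act ?n ?\<pi> x)"
    if "\<sigma> permutes {..<?n}" for \<sigma>
    using that pp by (simp add: act_comp act_in_Mn permutes_compose permutes_inv act_inv_act x)
  show ?thesis unfolding orb_def sum_list_cperm[OF p]
  proof (intro equalityI subsetI)
    fix y assume "y \<in> act ?n ?\<pi> ` (\<lambda>\<sigma>. act ?n \<sigma> x) ` SigmaC r"
    then obtain \<sigma> where "\<sigma> \<in> SigmaC r" "y = act ?n ?\<pi> (act ?n \<sigma> x)" by blast
    then show "y \<in> (\<lambda>\<tau>. act ?n \<tau> (act ?n ?\<pi> x)) ` SigmaC (cperm \<rho> r)"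
      using conj[OF SigmaC_permutes] blockperm_conj_SigmaC[OF p] by blast
  next
    fix y assume "y \<in> (\<lambda>\<tau>. act ?n \<tau> (act ?n ?\<pi> x)) ` SigmaC (cperm \<rho> r)"
    then obtain \<tau> where \<tau>: "\<tau> \<in> SigmaC (cperm \<rho> r)" "y = act ?n \<tau> (act ?n ?\<pi> x)" by blast
    define \<sigma> where "\<sigma> = inv ?\<pi> \<circ> \<tau> \<circ> ?\<pi>"
    have \<sigma>: "\<sigma> \<in> SigmaC r" using blockperm_conj_inv_SigmaC[OF p \<tau>(1)] by (simp add: \<sigma>_def)
    have "?\<pi> \<circ> \<sigma> \<circ> inv ?\<pi> = \<tau>"
      by (simp add: \<sigma>_def comp_assoc permutes_inv_o[OF pp]) (simp add: comp_assoc[symmetric] permutes_inv_o[OF pp])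
    then have "y = act ?n ?\<pi> (act ?n \<sigma> x)" using conj[OF SigmaC_permutes[OF \<sigma>]] \<tau>(2) by simp
    then show "y \<in> act ?n ?\<pi> ` (\<lambda>\<sigma>. act ?n \<sigma> x) ` SigmaC r" using \<sigma> by blast
  qed
qed

lemma act_blockperm_orbit_sum:
  assumes p: "\<rho> permutes {..<length r}" and x: "x \<in> B (sum_list r)"
  shows "act (sum_list r) (blockperm r \<rho>) (orbit_sum (orb act r x))
    = orbit_sum (orb act (cperm \<rho> r) (act (sum_list r) (blockperm r \<rho>) x))"
  using act_orbit_sum[OF blockperm_permutes[OF p]] orb_subset_B[OF x] B_subset_Mn
    act_blockperm_orb[OF p B_in_Mn[OF x]] by (metis subset_trans)

lemma orb_blockperm_in_classes:
  assumes p: "\<rho> permutes {..<length r}" and x: "x \<in> B (sum_list r)"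
  shows "orb act (cperm \<rho> r) (act (sum_list r) (blockperm r \<rho>) x) \<in> classes B act (cperm \<rho> r)"
  using act_in_B[OF blockperm_permutes[OF p] x] sum_list_cperm[OF p] by (auto simp: classes_def)

lemma act_blockperm_in_invs:
  assumes p: "\<rho> permutes {..<length r}" and x: "x \<in> invs Mn act r"
  shows "act (sum_list r) (blockperm r \<rho>) x \<in> invs Mn act (cperm \<rho> r)"
proof -
  let ?n = "sum_list r" and ?\<pi> = "blockperm r \<rho>"
  have pp: "?\<pi> permutes {..<?n}" using blockperm_permutes[OF p] .
  have xM: "x \<in> Mn ?n" using x by (simp add: invs_def)
  have "act ?n \<tau> (act ?n ?\<pi> x) = act ?n ?\<pi> x" if \<tau>: "\<tau> \<in> SigmaC (cperm \<rho> r)" for \<tau>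
  proof -
    have \<tau>p: "\<tau> permutes {..<?n}" using SigmaC_permutes[OF \<tau>] sum_list_cperm[OF p] by simp
    have "act ?n (inv ?\<pi> \<circ> \<tau> \<circ> ?\<pi>) x = x"
      using x blockperm_conj_inv_SigmaC[OF p \<tau>] by (simp add: invs_def)
    then have "act ?n (inv ?\<pi>) (act ?n \<tau> (act ?n ?\<pi> x)) = x"
      using \<tau>p pp xM by (simp add: act_comp act_in_Mn permutes_compose permutes_inv)
    then show ?thesis using act_act_inv[OF pp] act_in_Mn[OF \<tau>p act_in_Mn[OF pp xM]] by metis
  qed
  then show ?thesis using act_in_Mn[OF pp xM] sum_list_cperm[OF p] by (simp add: invs_def)
qed

lemma invs_mono:
  "SigmaC r' \<subseteq> SigmaC r \<Longrightarrow> sum_list r' = sum_list r \<Longrightarrow> invs Mn act r \<subseteq> invs Mn act r'"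
  by (auto simp: invs_def)

lemma orb_Cons_0: "orb act (0 # r) x = orb act r x"
  by (simp add: orb_def SigmaC_Cons_0)

lemma classes_Cons_0: "classes B act (0 # r) = classes B act r"
  by (simp add: classes_def orb_Cons_0)

lemma invs_Cons_0: "invs Mn act (0 # r) = invs Mn act r"
  by (simp add: invs_def SigmaC_Cons_0)

context
  fixes r r' :: "nat list" and x :: 'v
  assumes subgroup: "SigmaC r' \<subseteq> SigmaC r" and same_sum: "sum_list r' = sum_list r"
    and x: "x \<in> B (sum_list r)"
begin

lemma subclasses_in_classes: "{orb act r' y |y. y \<in> orb act r x} \<subseteq> classes B act r'"
  using orb_subset_B[OF x] same_sum by (auto simp: classes_def)

lemma orbit_sum_eq_sum_subclasses:
  "orbit_sum (orb act r x) = (\<Sum>c\<in>{orb act r' y |y. y \<in> orb act r x}. orbit_sum c)"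
proof -
  let ?C = "{orb act r' y |y. y \<in> orb act r x}"
  have "\<Union>?C = orb act r x"
  proof (intro equalityI subsetI)
    fix z assume "z \<in> \<Union>?C"
    then obtain y where y: "y \<in> orb act r x" "z \<in> orb act r' y" by blast
    then have "z \<in> orb act r y" using subgroup same_sum by (auto simp: orb_def)
    then show "z \<in> orb act r x" using orb_eq_if_mem[OF B_in_Mn[OF x] y(1)] by simp
  next
    fix y assume "y \<in> orb act r x"
    then show "y \<in> \<Union>?C"
      using self_in_orb[of y r'] orb_subset_B[OF x] B_in_Mn same_sum by fastforce
  qed
  moreover have "(\<Sum>y\<in>\<Union>?C. y) = (\<Sum>c\<in>?C. \<Sum>y\<in>c. y)"
  proof (rule sum.Union_disjoint[unfolded comp_def])
    show "\<forall>c\<in>?C. finite c" using finite_class subclasses_in_classes by blast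
    show "\<forall>c\<in>?C. \<forall>c'\<in>?C. c \<noteq> c' \<longrightarrow> c \<inter> c' = {}"
    proof (intro ballI impI)
      fix c c' assume c: "c \<in> ?C" and c': "c' \<in> ?C" and "c \<noteq> c'"
      then show "c \<inter> c' = {}"
        using classes_disjoint[OF subsetD[OF subclasses_in_classes c] subsetD[OF subclasses_in_classes c']]
        by blast
    qed
  qed
  ultimately show ?thesis by (simp add: orbit_sum_def)
qed

end

section \<open>Relative traces of orbit sums\<close>

definition relative_trace :: "nat list \<Rightarrow> nat list \<Rightarrow> 'v \<Rightarrow> 'v" where
  "relative_trace r' r x = (\<Sum>C\<in>lcosets (SigmaC r') (SigmaC r). act (sum_list r) (SOME \<sigma>. \<sigma> \<in> C) x)"

lemma card_transporter:
  assumes g: "g \<in> SigmaC r" and x: "x \<in> Mn (sum_list r)"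
  shows "card {k \<in> SigmaC r. act (sum_list r) k x = act (sum_list r) g x} = card (stab act r x)"
proof -
  let ?n = "sum_list r"
  have gp: "g permutes {..<?n}" using SigmaC_permutes[OF g] .
  have "{k \<in> SigmaC r. act ?n k x = act ?n g x} = (\<circ>) g ` stab act r x"
  proof (intro equalityI subsetI)
    fix k assume k: "k \<in> {k \<in> SigmaC r. act ?n k x = act ?n g x}"
    have kp: "k permutes {..<?n}" using k SigmaC_permutes by blast
    have "act ?n (inv g \<circ> k) x = x"
      using k act_comp[OF permutes_inv[OF gp] kp x] act_inv_act[OF gp x] by simp
    moreover have "k = g \<circ> (inv g \<circ> k)" by (simp add: o_assoc permutes_inv_o(1)[OF gp])
    ultimately show "k \<in> (\<circ>) g ` stab act r x"
      using k comp_in_SigmaC[OF inv_in_SigmaC[OF g]] by (auto simp: stab_def)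
  qed (auto simp: stab_def act_comp[OF gp SigmaC_permutes x] intro: comp_in_SigmaC[OF g])
  then show ?thesis using card_image[OF inj_on_comp_left[OF gp]] by simp
qed

lemma finite_stab: "finite (stab act r x)"
  using finite_SigmaC by (simp add: stab_def)

lemma card_stab_pos: "x \<in> Mn (sum_list r) \<Longrightarrow> card (stab act r x) > 0"
  using finite_stab[of r x] id_in_SigmaC[of r] act_id by (auto simp: stab_def card_gt_0_iff)

context
  fixes r r' :: "nat list" and x :: 'v
  assumes subgroup: "SigmaC r \<subseteq> SigmaC r'" and same_sum: "sum_list r' = sum_list r"
    and x: "x \<in> B (sum_list r)"
begin

lemma lcoset_rep_permutes:
  "C \<in> lcosets (SigmaC r') (SigmaC r) \<Longrightarrow> (SOME \<sigma>. \<sigma> \<in> C) permutes {..<sum_list r}"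
  using SigmaC_permutes some_in_lcoset_SigmaC[OF subgroup] same_sum by metis

lemma card_lcosets_times_transporter:
  assumes z: "z \<in> orb act r' x"
  shows "card {(C, h) \<in> lcosets (SigmaC r') (SigmaC r) \<times> SigmaC r.
            act (sum_list r) ((SOME \<sigma>. \<sigma> \<in> C) \<circ> h) x = z} = card (stab act r' x)"
proof -
  let ?n = "sum_list r" and ?L = "lcosets (SigmaC r') (SigmaC r)"
  define \<phi> :: "(nat \<Rightarrow> nat) set \<times> (nat \<Rightarrow> nat) \<Rightarrow> nat \<Rightarrow> nat"
    where "\<phi> = (\<lambda>(C, h). (SOME \<sigma>. \<sigma> \<in> C) \<circ> h)"
  define Q where "Q = {p \<in> ?L \<times> SigmaC r. act ?n (\<phi> p) x = z}"
  have bij: "bij_betw \<phi> (?L \<times> SigmaC r) (SigmaC r')"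
    unfolding \<phi>_def by (rule bij_betw_lcosets_times_SigmaC[OF subgroup])
  obtain g1 where g1: "g1 \<in> SigmaC r'" "z = act ?n g1 x" using z same_sum by (auto simp: orb_def)
  have "Q \<subseteq> ?L \<times> SigmaC r" by (auto simp: Q_def)
  then have "card Q = card (\<phi> ` Q)"
    using card_image[OF inj_on_subset[OF bij_betw_imp_inj_on[OF bij]]] by simp
  also have "\<phi> ` Q = {g \<in> \<phi> ` (?L \<times> SigmaC r). act ?n g x = z}"
    unfolding Q_def by blast
  also have "\<dots> = {g \<in> SigmaC r'. act ?n g x = z}"
    using bij_betw_imp_surj_on[OF bij] by simp
  also have "card \<dots> = card (stab act r' x)"
    using card_transporter[OF g1(1)] B_in_Mn[OF x] g1(2) same_sum by simp
  finally have "card Q = card (stab act r' x)" .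
  moreover have "{(C, h) \<in> ?L \<times> SigmaC r. act ?n ((SOME \<sigma>. \<sigma> \<in> C) \<circ> h) x = z} = Q"
    by (auto simp: Q_def \<phi>_def)
  ultimately show ?thesis by simp
qed

lemma card_lcoset_fiber:
  assumes z: "z \<in> orb act r' x"
  shows "card {(C, y) \<in> lcosets (SigmaC r') (SigmaC r) \<times> orb act r x.
            act (sum_list r) (SOME \<sigma>. \<sigma> \<in> C) y = z} * card (stab act r x) = card (stab act r' x)"
proof -
  let ?n = "sum_list r" and ?L = "lcosets (SigmaC r') (SigmaC r)" and ?s = "\<lambda>C. SOME \<sigma>. \<sigma> \<in> C"
  define Q where "Q = {(C, h) \<in> ?L \<times> SigmaC r. act ?n (?s C \<circ> h) x = z}"
  define F where "F = {(C, y) \<in> ?L \<times> orb act r x. act ?n (?s C) y = z}"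
  define \<Phi> :: "(nat \<Rightarrow> nat) set \<times> (nat \<Rightarrow> nat) \<Rightarrow> (nat \<Rightarrow> nat) set \<times> 'v"
    where "\<Phi> = (\<lambda>(C, h). (C, act ?n h x))"
  have xM: "x \<in> Mn ?n" using B_in_Mn[OF x] .
  note act_rep_comp = act_comp[OF lcoset_rep_permutes SigmaC_permutes xM]
  have image_Q: "\<Phi> ` Q = F"
  proof (intro equalityI subsetI)
    fix p assume "p \<in> \<Phi> ` Q"
    then show "p \<in> F" using act_rep_comp by (auto simp: \<Phi>_def Q_def F_def orb_def)
  next
    fix p assume "p \<in> F"
    then obtain C h where "p = (C, act ?n h x)" "C \<in> ?L" "h \<in> SigmaC r" "act ?n (?s C) (act ?n h x) = z"
      by (auto simp: F_def orb_def)
    then show "p \<in> \<Phi> ` Q" using act_rep_comp by (force simp: \<Phi>_def Q_def)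
  qed
  have fiber: "card {q \<in> Q. \<Phi> q = p} = card (stab act r x)" if p: "p \<in> F" for p
  proof -
    obtain C h0 where C: "p = (C, act ?n h0 x)" "C \<in> ?L" "h0 \<in> SigmaC r"
      "act ?n (?s C) (act ?n h0 x) = z"
      using p by (auto simp: F_def orb_def)
    have "{q \<in> Q. \<Phi> q = p} = Pair C ` {h \<in> SigmaC r. act ?n h x = act ?n h0 x}"
      using C act_rep_comp by (auto simp: \<Phi>_def Q_def)
    also have "card \<dots> = card {h \<in> SigmaC r. act ?n h x = act ?n h0 x}"
      by (rule card_image) (simp add: inj_on_def)
    finally show ?thesis using card_transporter[OF C(3) xM] by simp
  qed
  have "finite Q" unfolding Q_def
    by (rule finite_subset[of _ "?L \<times> SigmaC r"]) (auto simp: lcosets_def finite_SigmaC)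
  then have "card Q = (\<Sum>p\<in>\<Phi> ` Q. card {q \<in> Q. \<Phi> q = p})"
    using sum.image_gen[of Q "\<lambda>_. 1::nat" \<Phi>] by simp
  also have "\<dots> = card F * card (stab act r x)" using fiber image_Q by simp
  finally show ?thesis using card_lcosets_times_transporter[OF z] by (simp add: Q_def F_def)
qed

lemma image_act_lcoset_reps:
  "(\<lambda>(C, y). act (sum_list r) (SOME \<sigma>. \<sigma> \<in> C) y) ` (lcosets (SigmaC r') (SigmaC r) \<times> orb act r x)
    = orb act r' x"
proof (intro equalityI subsetI)
  let ?n = "sum_list r" and ?L = "lcosets (SigmaC r') (SigmaC r)" and ?s = "\<lambda>C. SOME \<sigma>. \<sigma> \<in> C"
  fix z assume "z \<in> (\<lambda>(C, y). act ?n (?s C) y) ` (?L \<times> orb act r x)"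
  then obtain C y where C: "C \<in> ?L" "y \<in> orb act r x" "z = act ?n (?s C) y" by force
  then obtain h where h: "h \<in> SigmaC r" "y = act ?n h x" by (auto simp: orb_def)
  have "z = act ?n (?s C \<circ> h) x"
    using act_comp[OF lcoset_rep_permutes[OF C(1)] SigmaC_permutes[OF h(1)] B_in_Mn[OF x]] C h by simp
  moreover have "?s C \<circ> h \<in> SigmaC r'"
    using comp_in_SigmaC some_in_lcoset_SigmaC[OF subgroup C(1)] subgroup h(1) by blast
  ultimately show "z \<in> orb act r' x" using same_sum by (auto simp: orb_def)
next
  let ?n = "sum_list r" and ?L = "lcosets (SigmaC r') (SigmaC r)" and ?s = "\<lambda>C. SOME \<sigma>. \<sigma> \<in> C"
  fix z assume z: "z \<in> orb act r' x"
  define S where "S = {(C, y) \<in> ?L \<times> orb act r x. act ?n (?s C) y = z}"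
  have "card S * card (stab act r x) \<noteq> 0"
    using card_lcoset_fiber[OF z] card_stab_pos[of x r'] B_in_Mn[OF x] same_sum by (simp add: S_def)
  then have "S \<noteq> {}" by auto
  then show "z \<in> (\<lambda>(C, y). act ?n (?s C) y) ` (?L \<times> orb act r x)" by (force simp: S_def)
qed

lemma relative_trace_orbit_sum:
  "relative_trace r' r (orbit_sum (orb act r x))
     = sM (of_nat (card (stab act r' x) div card (stab act r x))) (orbit_sum (orb act r' x))"
proof -
  let ?n = "sum_list r" and ?L = "lcosets (SigmaC r') (SigmaC r)" and ?s = "\<lambda>C. SOME \<sigma>. \<sigma> \<in> C"
  let ?k = "card (stab act r' x) div card (stab act r x)"
  define f :: "(nat \<Rightarrow> nat) set \<times> 'v \<Rightarrow> 'v" where "f = (\<lambda>(C, y). act ?n (?s C) y)"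
  define P where "P = ?L \<times> orb act r x"
  have finite_P: "finite P" by (simp add: P_def lcosets_def finite_SigmaC finite_orb)
  have fiber: "card {p \<in> P. f p = z} = ?k" if "z \<in> orb act r' x" for z
  proof -
    have "{p \<in> P. f p = z} = {(C, y) \<in> ?L \<times> orb act r x. act ?n (?s C) y = z}"
      by (auto simp: P_def f_def)
    then have "card {p \<in> P. f p = z} * card (stab act r x) = card (stab act r' x)"
      using card_lcoset_fiber[OF that] by simp
    then show ?thesis using card_stab_pos[OF B_in_Mn[OF x]] by (metis div_mult_self_is_m)
  qed
  have "relative_trace r' r (orbit_sum (orb act r x)) = (\<Sum>C\<in>?L. \<Sum>y\<in>orb act r x. act ?n (?s C) y)"
    unfolding relative_trace_def orbit_sum_def
    using orb_subset_B[OF x] B_subset_Mn by (intro sum.cong refl act_sum lcoset_rep_permutes) blast+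
  also have "\<dots> = (\<Sum>p\<in>P. f p)" by (simp add: P_def f_def sum.cartesian_product)
  also have "\<dots> = (\<Sum>z\<in>f ` P. \<Sum>p\<in>{p \<in> P. f p = z}. f p)" by (rule sum.image_gen[OF finite_P])
  also have "\<dots> = (\<Sum>z\<in>orb act r' x. sM (of_nat ?k) z)"
    unfolding P_def f_def image_act_lcoset_reps
    by (intro sum.cong refl) (simp add: M.sum_constant_scale fiber[unfolded P_def f_def])
  also have "\<dots> = sM (of_nat ?k) (orbit_sum (orb act r' x))"
    by (simp add: orbit_sum_def M.scale_sum_right)
  finally show ?thesis .
qed

end

lemma relative_trace_linear:
  assumes "SigmaC r \<subseteq> SigmaC r'" "sum_list r' = sum_list r"
    and "x \<in> Mn (sum_list r)" "y \<in> Mn (sum_list r)"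
  shows "relative_trace r' r (sM u x + y) = sM u (relative_trace r' r x) + relative_trace r' r y"
proof -
  have "(SOME \<sigma>. \<sigma> \<in> C) permutes {..<sum_list r}" if "C \<in> lcosets (SigmaC r') (SigmaC r)" for C
    using SigmaC_permutes some_in_lcoset_SigmaC[OF assms(1) that] assms(2) by metis
  then show ?thesis
    unfolding relative_trace_def M.scale_sum_right sum.distrib[symmetric]
    using assms(3,4) by (intro sum.cong refl act_linear)
qed

lemma relative_trace_in_invs:
  assumes subgroup: "SigmaC r \<subseteq> SigmaC r'" and same_sum: "sum_list r' = sum_list r"
    and x: "x \<in> invs Mn act r"
  shows "relative_trace r' r x \<in> invs Mn act r'"
  using x
proof (induction rule: invs_induct)
  case zero
  have "relative_trace r' r 0 = 0"
    using relative_trace_linear[OF subgroup same_sum, of 0 0 1] M.subspace_0[OF subspace_Mn] by simp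
  then show ?case using M.subspace_0[OF subspace_invs] by simp
next
  case (orbit_sum c u y)
  obtain x0 where x0: "x0 \<in> B (sum_list r)" "c = orb act r x0"
    using orbit_sum(1) by (auto simp: classes_def)
  have "orb act r' x0 \<in> classes B act r'" using x0(1) same_sum by (auto simp: classes_def)
  then have "relative_trace r' r (orbit_sum c) \<in> invs Mn act r'"
    using relative_trace_orbit_sum[OF subgroup same_sum x0(1)] x0(2)
      M.subspace_scale[OF subspace_invs orbit_sum_in_invs] by simp
  moreover have "orbit_sum c \<in> Mn (sum_list r)" "y \<in> Mn (sum_list r)"
    using orbit_sum_in_invs[OF orbit_sum(1)] orbit_sum(2) by (simp_all add: invs_def)
  ultimately show ?case
    using relative_trace_linear[OF subgroup same_sum] orbit_sum(3)
      M.subspace_add[OF subspace_invs] M.subspace_scale[OF subspace_invs] by simp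
qed

section \<open>From beta(M) to gamma(M)\<close>

definition invs_linear :: "('f \<Rightarrow> 'a::ab_group_add \<Rightarrow> 'a) \<Rightarrow> ('v \<Rightarrow> nat list \<Rightarrow> 'a list \<Rightarrow> 'a) \<Rightarrow> bool"
  where "invs_linear sA \<beta> \<longleftrightarrow> (\<forall>r x y c as. x \<in> invs Mn act r \<longrightarrow> y \<in> invs Mn act r \<longrightarrow>
    length as = length r \<longrightarrow> \<beta> (sM c x + y) r as = sA c (\<beta> x r as) + \<beta> y r as)"

lemma invs_linearD:
  "invs_linear sA \<beta> \<Longrightarrow> x \<in> invs Mn act r \<Longrightarrow> y \<in> invs Mn act r \<Longrightarrow> length as = length r \<Longrightarrow>
    \<beta> (sM c x + y) r as = sA c (\<beta> x r as) + \<beta> y r as"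
  by (simp add: invs_linear_def)

context
  fixes sA :: "'f \<Rightarrow> 'a::ab_group_add \<Rightarrow> 'a" and \<beta> :: "'v \<Rightarrow> nat list \<Rightarrow> 'a list \<Rightarrow> 'a"
  assumes vector_space: "vector_space sA" and invs_linear: "invs_linear sA \<beta>"
begin

interpretation A: vector_space sA by (rule vector_space)

lemmas op_linear = invs_linearD[OF invs_linear]

lemma invs_linear_zero: "length as = length r \<Longrightarrow> \<beta> 0 r as = 0"
  using op_linear[OF M.subspace_0[OF subspace_invs] M.subspace_0[OF subspace_invs], where as=as and c=1] by simp

lemma invs_linear_scale: "x \<in> invs Mn act r \<Longrightarrow> length as = length r \<Longrightarrow> \<beta> (sM c x) r as = sA c (\<beta> x r as)"
  using op_linear[OF _ M.subspace_0[OF subspace_invs]] invs_linear_zero by fastforce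

lemma invs_linear_sum:
  "(\<And>i. i \<in> I \<Longrightarrow> f i \<in> invs Mn act r) \<Longrightarrow> length as = length r \<Longrightarrow>
    \<beta> (sum f I) r as = (\<Sum>i\<in>I. \<beta> (f i) r as)"
proof (induction I rule: infinite_finite_induct)
  case (insert i I)
  have "sum f I \<in> invs Mn act r" using M.subspace_sum[OF subspace_invs] insert.prems by blast
  then show ?case using insert op_linear[of "f i" r "sum f I" as 1] by simp
qed (simp_all add: invs_linear_zero)

end

context
  fixes sA :: "'f \<Rightarrow> 'a::ab_group_add \<Rightarrow> 'a" and \<beta> :: "'v \<Rightarrow> nat list \<Rightarrow> 'a list \<Rightarrow> 'a"
  assumes beta: "is_beta sA sM Mn act \<beta>"
begin

lemma beta_undefined:
  "\<not> (x \<in> invs Mn act r \<and> length as = length r) \<Longrightarrow> \<beta> x r as = undefined"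
  using beta[unfolded is_beta_def, THEN conjunct1] by blast

lemma beta_permute:
  "x \<in> invs Mn act r \<Longrightarrow> length as = length r \<Longrightarrow> \<rho> permutes {..<length r} \<Longrightarrow>
    \<beta> x r as = \<beta> (act (sum_list r) (blockperm r \<rho>) x) (cperm \<rho> r) (cperm \<rho> as)"
  using beta[unfolded is_beta_def, THEN conjunct2, THEN conjunct1] by blast

lemma beta_Cons_0: "x \<in> invs Mn act (0 # r) \<Longrightarrow> length as = length r \<Longrightarrow>
    \<beta> x (0 # r) (a0 # as) = \<beta> x r as"
  using beta[unfolded is_beta_def, THEN conjunct2, THEN conjunct2, THEN conjunct1] by blast

lemma beta_homogeneous: "x \<in> invs Mn act r \<Longrightarrow> length (a # as) = length r \<Longrightarrow>
    \<beta> x r (sA c a # as) = sA (c ^ hd r) (\<beta> x r (a # as))"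
  using beta[unfolded is_beta_def, THEN conjunct2, THEN conjunct2, THEN conjunct2, THEN conjunct1] by blast

lemma beta_rep: "x \<in> invs Mn act r \<Longrightarrow> sum_list q = length r \<Longrightarrow> length as = length q \<Longrightarrow>
    \<beta> x r (rep q as) =
      \<beta> (\<Sum>C\<in>lcosets (SigmaC (coarsen q r)) (SigmaC r). act (sum_list r) (SOME \<sigma>. \<sigma> \<in> C) x)
        (coarsen q r) as"
  using beta[unfolded is_beta_def, THEN conjunct2, THEN conjunct2, THEN conjunct2, THEN conjunct2, THEN conjunct1] by blast

lemma beta_add_head: "x \<in> invs Mn act r \<Longrightarrow> length (a1 # as) = length r \<Longrightarrow>
    \<beta> x r ((a0 + a1) # as) = (\<Sum>l\<in>{..hd r}. \<beta> x (l # (hd r - l) # tl r) (a0 # a1 # as))"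
  using beta[unfolded is_beta_def, THEN conjunct2, THEN conjunct2, THEN conjunct2, THEN conjunct2, THEN conjunct2, THEN conjunct1] by blast

lemma beta_linear: "x \<in> invs Mn act r \<Longrightarrow> y \<in> invs Mn act r \<Longrightarrow> length as = length r \<Longrightarrow>
    \<beta> (sM c x + y) r as = sA c (\<beta> x r as) + \<beta> y r as"
  using beta[unfolded is_beta_def, THEN conjunct2, THEN conjunct2, THEN conjunct2, THEN conjunct2, THEN conjunct2, THEN conjunct2] by blast

lemma beta_invs_linear: "invs_linear sA \<beta>"
  using beta_linear by (simp add: invs_linear_def)

end

context
  fixes sA :: "'f \<Rightarrow> 'a::ab_group_add \<Rightarrow> 'a" and \<beta> :: "'v \<Rightarrow> nat list \<Rightarrow> 'a list \<Rightarrow> 'a"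
  assumes vector_space: "vector_space sA" and beta: "is_beta sA sM Mn act \<beta>"
begin

lemma P_M_permute:
  assumes x: "x \<in> B (sum_list r)" and l: "length as = length r" and p: "\<rho> permutes {..<length r}"
  shows "P_M B act \<beta> (orb act r x) r as =
    P_M B act \<beta> (orb act (cperm \<rho> r) (act (sum_list r) (blockperm r \<rho>) x)) (cperm \<rho> r) (cperm \<rho> as)"
proof -
  have c: "orb act r x \<in> classes B act r" using orb_in_classes[OF x] .
  have "P_M B act \<beta> (orb act r x) r as
      = \<beta> (act (sum_list r) (blockperm r \<rho>) (orbit_sum (orb act r x))) (cperm \<rho> r) (cperm \<rho> as)"
    using P_M_eq[OF c l] beta_permute[OF beta orbit_sum_in_invs[OF c] l p] by simp
  also have "\<dots> = \<beta> (orbit_sum (orb act (cperm \<rho> r) (act (sum_list r) (blockperm r \<rho>) x)))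
      (cperm \<rho> r) (cperm \<rho> as)"
    by (simp add: act_blockperm_orbit_sum[OF p x])
  also have "\<dots> = P_M B act \<beta> (orb act (cperm \<rho> r) (act (sum_list r) (blockperm r \<rho>) x))
      (cperm \<rho> r) (cperm \<rho> as)"
    by (rule P_M_eq[symmetric, OF orb_blockperm_in_classes[OF p x]]) (simp add: l)
  finally show ?thesis .
qed

lemma P_M_Cons_0:
  assumes x: "x \<in> B (sum_list r)" and l: "length as = length r"
  shows "P_M B act \<beta> (orb act (0 # r) x) (0 # r) (a0 # as) = P_M B act \<beta> (orb act r x) r as"
proof -
  have c: "orb act r x \<in> classes B act r" using orb_in_classes[OF x] .
  then have c0: "orb act (0 # r) x \<in> classes B act (0 # r)" by (simp add: orb_Cons_0 classes_Cons_0)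
  have "P_M B act \<beta> (orb act (0 # r) x) (0 # r) (a0 # as) = \<beta> (orbit_sum (orb act r x)) (0 # r) (a0 # as)"
    using P_M_eq[OF c0, of "a0 # as" \<beta>] l by (simp add: orb_Cons_0)
  also have "\<dots> = \<beta> (orbit_sum (orb act r x)) r as"
    using beta_Cons_0[OF beta _ l] orbit_sum_in_invs[OF c] by (simp add: invs_Cons_0)
  also have "\<dots> = P_M B act \<beta> (orb act r x) r as" using P_M_eq[OF c l] by simp
  finally show ?thesis .
qed

lemma P_M_homogeneous:
  assumes x: "x \<in> B (sum_list r)" and l: "length (a # as) = length r"
  shows "P_M B act \<beta> (orb act r x) r (sA c a # as) = sA (c ^ hd r) (P_M B act \<beta> (orb act r x) r (a # as))"
proof -
  have c: "orb act r x \<in> classes B act r" using orb_in_classes[OF x] .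
  show ?thesis
    using beta_homogeneous[OF beta orbit_sum_in_invs[OF c] l] P_M_eq[OF c l]
      P_M_eq[OF c, of "sA c a # as" \<beta>] l by simp
qed

lemma P_M_rep:
  assumes x: "x \<in> B (sum_list r)" and q: "sum_list q = length r" and l: "length as = length q"
  shows "P_M B act \<beta> (orb act r x) r (rep q as) =
    sA (of_nat (card (stab act (coarsen q r) x) div card (stab act r x)))
      (P_M B act \<beta> (orb act (coarsen q r) x) (coarsen q r) as)"
proof -
  let ?r' = "coarsen q r" and ?k = "card (stab act (coarsen q r) x) div card (stab act r x)"
  have c: "orb act r x \<in> classes B act r" using orb_in_classes[OF x] .
  have same_sum: "sum_list ?r' = sum_list r" using sum_list_coarsen[OF q] .
  have c': "orb act ?r' x \<in> classes B act ?r'" using orb_in_classes x same_sum by simp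
  have l': "length as = length ?r'" using l by (simp add: length_coarsen)
  have "P_M B act \<beta> (orb act r x) r (rep q as) = \<beta> (orbit_sum (orb act r x)) r (rep q as)"
    by (rule P_M_eq[OF c]) (simp add: length_rep q)
  also have "\<dots> = \<beta> (sM (of_nat ?k) (orbit_sum (orb act ?r' x))) ?r' as"
    using beta_rep[OF beta orbit_sum_in_invs[OF c] q l, folded relative_trace_def]
      relative_trace_orbit_sum[OF SigmaC_subset_coarsen[OF q] same_sum x] by simp
  also have "\<dots> = sA (of_nat ?k) (P_M B act \<beta> (orb act ?r' x) ?r' as)"
    using invs_linear_scale[OF vector_space beta_invs_linear[OF beta] orbit_sum_in_invs[OF c'] l'] P_M_eq[OF c' l']
    by simp
  finally show ?thesis .
qed

lemma P_M_add_head: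
  assumes x: "x \<in> B (sum_list r)" and l: "length (a1 # as) = length r"
  shows "P_M B act \<beta> (orb act r x) r ((a0 + a1) # as) =
    (\<Sum>l\<in>{..hd r}. \<Sum>c\<in>{orb act (l # (hd r - l) # tl r) y | y. y \<in> orb act r x}.
      P_M B act \<beta> c (l # (hd r - l) # tl r) (a0 # a1 # as))"
proof -
  have c: "orb act r x \<in> classes B act r" using orb_in_classes[OF x] .
  have r: "r \<noteq> []" using l by auto
  have "P_M B act \<beta> (orb act r x) r ((a0 + a1) # as)
      = (\<Sum>l\<in>{..hd r}. \<beta> (orbit_sum (orb act r x)) (l # (hd r - l) # tl r) (a0 # a1 # as))"
    using P_M_eq[OF c, of "(a0 + a1) # as"] beta_add_head[OF beta orbit_sum_in_invs[OF c] l] l by simp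
  also have "\<dots> = (\<Sum>l\<in>{..hd r}. \<Sum>c\<in>{orb act (l # (hd r - l) # tl r) y | y. y \<in> orb act r x}.
      P_M B act \<beta> c (l # (hd r - l) # tl r) (a0 # a1 # as))"
  proof (rule sum.cong[OF refl])
    fix l assume "l \<in> {..hd r}"
    then have split: "SigmaC (l # (hd r - l) # tl r) \<subseteq> SigmaC r"
      "sum_list (l # (hd r - l) # tl r) = sum_list r"
      using SigmaC_split_head[OF r, of l] sum_list_split_head[OF r, of l] by simp_all
    let ?r' = "l # (hd r - l) # tl r" and ?C = "{orb act (l # (hd r - l) # tl r) y | y. y \<in> orb act r x}"
    have l': "length (a0 # a1 # as) = length ?r'" using l r by (cases r) auto
    have "\<beta> (orbit_sum (orb act r x)) ?r' (a0 # a1 # as) = (\<Sum>c\<in>?C. \<beta> (orbit_sum c) ?r' (a0 # a1 # as))"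
      unfolding orbit_sum_eq_sum_subclasses[OF split x]
      using subclasses_in_classes[OF split x] orbit_sum_in_invs
      by (intro invs_linear_sum[OF vector_space beta_invs_linear[OF beta] _ l']) blast
    also have "\<dots> = (\<Sum>c\<in>?C. P_M B act \<beta> c ?r' (a0 # a1 # as))"
      using P_M_eq[OF subsetD[OF subclasses_in_classes[OF split x]] l'] by simp
    finally show "\<beta> (orbit_sum (orb act r x)) ?r' (a0 # a1 # as) = (\<Sum>c\<in>?C. P_M B act \<beta> c ?r' (a0 # a1 # as))" .
  qed
  finally show ?thesis .
qed

lemma is_gamma_P_M: "is_gamma sA B act (P_M B act \<beta>)"
  unfolding is_gamma_def
  using P_M_permute P_M_Cons_0 P_M_homogeneous P_M_rep P_M_add_head
  by (intro conjI allI impI) (auto simp: P_M_def)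

end

section \<open>From gamma(M) to beta(M)\<close>

definition beta_of_gamma ::
  "('f \<Rightarrow> 'a::ab_group_add \<Rightarrow> 'a) \<Rightarrow> ('v set \<Rightarrow> nat list \<Rightarrow> 'a list \<Rightarrow> 'a) \<Rightarrow> 'v \<Rightarrow> nat list \<Rightarrow> 'a list \<Rightarrow> 'a"
  where "beta_of_gamma sA \<gamma> x r as =
    (if x \<in> invs Mn act r \<and> length as = length r
     then vector_space_pair.construct sM sA (orbit_sum ` classes B act r)
       (\<lambda>v. \<gamma> (the_inv_into (classes B act r) orbit_sum v) r as) x
     else undefined)"

context
  fixes sA :: "'f \<Rightarrow> 'a::ab_group_add \<Rightarrow> 'a" and \<gamma> :: "'v set \<Rightarrow> nat list \<Rightarrow> 'a list \<Rightarrow> 'a"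
  assumes vector_space: "vector_space sA"
begin

interpretation A: vector_space sA by (rule vector_space)
interpretation MA: vector_space_pair sM sA by unfold_locales

lemma beta_of_gamma_invs_linear: "invs_linear sA (beta_of_gamma sA \<gamma>)"
  unfolding invs_linear_def
proof (intro allI impI)
  fix r x y c and as :: "'a list"
  assume x: "x \<in> invs Mn act r" and y: "y \<in> invs Mn act r" and l: "length as = length r"
  have "sM c x + y \<in> invs Mn act r"
    using M.subspace_add[OF subspace_invs] M.subspace_scale[OF subspace_invs] x y by blast
  moreover have "Vector_Spaces.linear sM sA (MA.construct (orbit_sum ` classes B act r)
      (\<lambda>v. \<gamma> (the_inv_into (classes B act r) orbit_sum v) r as))"
    by (rule MA.linear_construct[OF independent_orbit_sums])
  ultimately show "beta_of_gamma sA \<gamma> (sM c x + y) r as =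
      sA c (beta_of_gamma sA \<gamma> x r as) + beta_of_gamma sA \<gamma> y r as"
    using x y l by (simp add: beta_of_gamma_def linear_iff)
qed

lemma beta_of_gamma_orbit_sum:
  assumes c: "c \<in> classes B act r" and l: "length as = length r"
  shows "beta_of_gamma sA \<gamma> (orbit_sum c) r as = \<gamma> c r as"
proof -
  have "MA.construct (orbit_sum ` classes B act r)
      (\<lambda>v. \<gamma> (the_inv_into (classes B act r) orbit_sum v) r as) (orbit_sum c)
      = \<gamma> (the_inv_into (classes B act r) orbit_sum (orbit_sum c)) r as"
    using c by (intro MA.construct_basis[OF independent_orbit_sums]) blast
  then show ?thesis
    using the_inv_into_f_f[OF inj_on_orbit_sum c] orbit_sum_in_invs[OF c] l
    by (simp add: beta_of_gamma_def)
qed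

lemma beta_of_gamma_sum_subclasses:
  assumes refines: "SigmaC r' \<subseteq> SigmaC r" "sum_list r' = sum_list r"
    and x: "x \<in> B (sum_list r)" and l: "length as = length r'"
  shows "(\<Sum>c\<in>{orb act r' y | y. y \<in> orb act r x}. \<gamma> c r' as)
    = beta_of_gamma sA \<gamma> (orbit_sum (orb act r x)) r' as"
proof -
  let ?C = "{orb act r' y | y. y \<in> orb act r x}"
  have sub: "?C \<subseteq> classes B act r'" using subclasses_in_classes[OF refines x] .
  have "(\<Sum>c\<in>?C. \<gamma> c r' as) = (\<Sum>c\<in>?C. beta_of_gamma sA \<gamma> (orbit_sum c) r' as)"
    using beta_of_gamma_orbit_sum[OF subsetD[OF sub] l] by simp
  also have "\<dots> = beta_of_gamma sA \<gamma> (\<Sum>c\<in>?C. orbit_sum c) r' as"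
    using sub orbit_sum_in_invs
    by (intro invs_linear_sum[OF vector_space beta_of_gamma_invs_linear, symmetric] l) blast
  finally show ?thesis using orbit_sum_eq_sum_subclasses[OF refines x] by simp
qed

end

context
  fixes sA :: "'f \<Rightarrow> 'a::ab_group_add \<Rightarrow> 'a" and \<gamma> :: "'v set \<Rightarrow> nat list \<Rightarrow> 'a list \<Rightarrow> 'a"
  assumes gamma: "is_gamma sA B act \<gamma>"
begin

lemma gamma_undefined: "\<not> (c \<in> classes B act r \<and> length as = length r) \<Longrightarrow> \<gamma> c r as = undefined"
  using gamma[unfolded is_gamma_def, THEN conjunct1] by blast

lemma gamma_permute:
  "x \<in> B (sum_list r) \<Longrightarrow> length as = length r \<Longrightarrow> \<rho> permutes {..<length r} \<Longrightarrow>
    \<gamma> (orb act r x) r as =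
      \<gamma> (orb act (cperm \<rho> r) (act (sum_list r) (blockperm r \<rho>) x)) (cperm \<rho> r) (cperm \<rho> as)"
  using gamma[unfolded is_gamma_def, THEN conjunct2, THEN conjunct1] by blast

lemma gamma_Cons_0:
  "x \<in> B (sum_list r) \<Longrightarrow> length as = length r \<Longrightarrow>
    \<gamma> (orb act (0 # r) x) (0 # r) (a0 # as) = \<gamma> (orb act r x) r as"
  using gamma[unfolded is_gamma_def, THEN conjunct2, THEN conjunct2, THEN conjunct1] by blast

lemma gamma_homogeneous:
  "x \<in> B (sum_list r) \<Longrightarrow> length (a # as) = length r \<Longrightarrow>
    \<gamma> (orb act r x) r (sA c a # as) = sA (c ^ hd r) (\<gamma> (orb act r x) r (a # as))"
  using gamma[unfolded is_gamma_def, THEN conjunct2, THEN conjunct2, THEN conjunct2, THEN conjunct1]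
  by blast

lemma gamma_rep:
  "x \<in> B (sum_list r) \<Longrightarrow> sum_list q = length r \<Longrightarrow> length as = length q \<Longrightarrow>
    \<gamma> (orb act r x) r (rep q as) =
      sA (of_nat (card (stab act (coarsen q r) x) div card (stab act r x)))
        (\<gamma> (orb act (coarsen q r) x) (coarsen q r) as)"
  using gamma[unfolded is_gamma_def, THEN conjunct2, THEN conjunct2, THEN conjunct2, THEN conjunct2,
      THEN conjunct1]
  by blast

lemma gamma_add_head:
  "x \<in> B (sum_list r) \<Longrightarrow> length (a1 # as) = length r \<Longrightarrow>
    \<gamma> (orb act r x) r ((a0 + a1) # as) =
      (\<Sum>l\<in>{..hd r}. \<Sum>c\<in>{orb act (l # (hd r - l) # tl r) y | y. y \<in> orb act r x}.
        \<gamma> c (l # (hd r - l) # tl r) (a0 # a1 # as))"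
  using gamma[unfolded is_gamma_def, THEN conjunct2, THEN conjunct2, THEN conjunct2, THEN conjunct2,
      THEN conjunct2]
  by blast

end

context
  fixes sA :: "'f \<Rightarrow> 'a::ab_group_add \<Rightarrow> 'a" and \<gamma> :: "'v set \<Rightarrow> nat list \<Rightarrow> 'a list \<Rightarrow> 'a"
  assumes vector_space: "vector_space sA" and gamma: "is_gamma sA B act \<gamma>"
begin

interpretation A: vector_space sA by (rule vector_space)

abbreviation "\<beta>\<gamma> \<equiv> beta_of_gamma sA \<gamma>"

lemmas beta_of_gamma_linear = invs_linearD[OF beta_of_gamma_invs_linear[OF vector_space]]
lemmas beta_of_gamma_on_orbit_sum = beta_of_gamma_orbit_sum[OF vector_space]

lemma beta_of_gamma_permute:
  assumes x: "x \<in> invs Mn act r" and l: "length as = length r" and p: "\<rho> permutes {..<length r}"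
  shows "\<beta>\<gamma> x r as = \<beta>\<gamma> (act (sum_list r) (blockperm r \<rho>) x) (cperm \<rho> r) (cperm \<rho> as)"
proof (rule linear_on_invs_eqI[OF vector_space x])
  let ?n = "sum_list r" and ?\<pi> = "blockperm r \<rho>"
  have pp: "?\<pi> permutes {..<?n}" using blockperm_permutes[OF p] .
  have l': "length (cperm \<rho> as) = length (cperm \<rho> r)" using l by simp
  show "\<beta>\<gamma> (sM c x + y) r as = sA c (\<beta>\<gamma> x r as) + \<beta>\<gamma> y r as"
    if "x \<in> invs Mn act r" "y \<in> invs Mn act r" for c x y
    using beta_of_gamma_linear[OF that l] .
  show "\<beta>\<gamma> (act ?n ?\<pi> (sM c x + y)) (cperm \<rho> r) (cperm \<rho> as) =
      sA c (\<beta>\<gamma> (act ?n ?\<pi> x) (cperm \<rho> r) (cperm \<rho> as)) + \<beta>\<gamma> (act ?n ?\<pi> y) (cperm \<rho> r) (cperm \<rho> as)"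
    if "x \<in> invs Mn act r" "y \<in> invs Mn act r" for c x y
    using that act_linear[OF pp] beta_of_gamma_linear[OF act_blockperm_in_invs[OF p] act_blockperm_in_invs[OF p] l']
    by (simp add: invs_def)
  show "\<beta>\<gamma> (orbit_sum c) r as = \<beta>\<gamma> (act ?n ?\<pi> (orbit_sum c)) (cperm \<rho> r) (cperm \<rho> as)"
    if c: "c \<in> classes B act r" for c
  proof -
    obtain x0 where x0: "x0 \<in> B ?n" "c = orb act r x0" using c by (auto simp: classes_def)
    show ?thesis
      using beta_of_gamma_on_orbit_sum[OF c l] beta_of_gamma_on_orbit_sum[OF orb_blockperm_in_classes[OF p x0(1)] l']
        gamma_permute[OF gamma x0(1) l p] act_blockperm_orbit_sum[OF p x0(1)] x0(2) by simp
  qed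
qed

lemma beta_of_gamma_Cons_0:
  assumes x: "x \<in> invs Mn act (0 # r)" and l: "length as = length r"
  shows "\<beta>\<gamma> x (0 # r) (a0 # as) = \<beta>\<gamma> x r as"
proof (rule linear_on_invs_eqI[OF vector_space x[unfolded invs_Cons_0]])
  have l0: "length (a0 # as) = length (0 # r)" using l by simp
  show "\<beta>\<gamma> (sM c x + y) (0 # r) (a0 # as) = sA c (\<beta>\<gamma> x (0 # r) (a0 # as)) + \<beta>\<gamma> y (0 # r) (a0 # as)"
    if "x \<in> invs Mn act r" "y \<in> invs Mn act r" for c x y
    using beta_of_gamma_linear[OF _ _ l0] that by (simp add: invs_Cons_0)
  show "\<beta>\<gamma> (sM c x + y) r as = sA c (\<beta>\<gamma> x r as) + \<beta>\<gamma> y r as"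
    if "x \<in> invs Mn act r" "y \<in> invs Mn act r" for c x y
    using beta_of_gamma_linear[OF that l] .
  show "\<beta>\<gamma> (orbit_sum c) (0 # r) (a0 # as) = \<beta>\<gamma> (orbit_sum c) r as" if c: "c \<in> classes B act r" for c
  proof -
    obtain x0 where x0: "x0 \<in> B (sum_list r)" "c = orb act r x0" using c by (auto simp: classes_def)
    show ?thesis
      using beta_of_gamma_on_orbit_sum[of c "0 # r" "a0 # as"] beta_of_gamma_on_orbit_sum[OF c l]
        gamma_Cons_0[OF gamma x0(1) l] c l x0(2) by (simp add: classes_Cons_0 orb_Cons_0)
  qed
qed

lemma beta_of_gamma_homogeneous:
  assumes x: "x \<in> invs Mn act r" and l: "length (a # as) = length r"
  shows "\<beta>\<gamma> x r (sA c a # as) = sA (c ^ hd r) (\<beta>\<gamma> x r (a # as))"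
proof (rule linear_on_invs_eqI[OF vector_space x])
  have l': "length (sA c a # as) = length r" using l by simp
  show "\<beta>\<gamma> (sM u x + y) r (sA c a # as) = sA u (\<beta>\<gamma> x r (sA c a # as)) + \<beta>\<gamma> y r (sA c a # as)"
    if "x \<in> invs Mn act r" "y \<in> invs Mn act r" for u x y
    using beta_of_gamma_linear[OF that l'] .
  show "sA (c ^ hd r) (\<beta>\<gamma> (sM u x + y) r (a # as)) =
      sA u (sA (c ^ hd r) (\<beta>\<gamma> x r (a # as))) + sA (c ^ hd r) (\<beta>\<gamma> y r (a # as))"
    if "x \<in> invs Mn act r" "y \<in> invs Mn act r" for u x y
    using beta_of_gamma_linear[OF that l] by (simp add: A.scale_right_distrib mult.commute)
  show "\<beta>\<gamma> (orbit_sum c') r (sA c a # as) = sA (c ^ hd r) (\<beta>\<gamma> (orbit_sum c') r (a # as))"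
    if c': "c' \<in> classes B act r" for c'
  proof -
    obtain x0 where x0: "x0 \<in> B (sum_list r)" "c' = orb act r x0" using c' by (auto simp: classes_def)
    show ?thesis
      using beta_of_gamma_on_orbit_sum[OF c' l] beta_of_gamma_on_orbit_sum[OF c' l']
        gamma_homogeneous[OF gamma x0(1) l] x0(2) by simp
  qed
qed

lemma beta_of_gamma_rep:
  assumes x: "x \<in> invs Mn act r" and q: "sum_list q = length r" and l: "length as = length q"
  shows "\<beta>\<gamma> x r (rep q as) = \<beta>\<gamma> (relative_trace (coarsen q r) r x) (coarsen q r) as"
proof (rule linear_on_invs_eqI[OF vector_space x])
  let ?r' = "coarsen q r"
  have subgroup: "SigmaC r \<subseteq> SigmaC ?r'" using SigmaC_subset_coarsen[OF q] .
  have same_sum: "sum_list ?r' = sum_list r" using sum_list_coarsen[OF q] .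
  have lr: "length (rep q as) = length r" using q by (simp add: length_rep)
  have l': "length as = length ?r'" using l by (simp add: length_coarsen)
  show "\<beta>\<gamma> (sM c x + y) r (rep q as) = sA c (\<beta>\<gamma> x r (rep q as)) + \<beta>\<gamma> y r (rep q as)"
    if "x \<in> invs Mn act r" "y \<in> invs Mn act r" for c x y
    using beta_of_gamma_linear[OF that lr] .
  show "\<beta>\<gamma> (relative_trace ?r' r (sM c x + y)) ?r' as =
      sA c (\<beta>\<gamma> (relative_trace ?r' r x) ?r' as) + \<beta>\<gamma> (relative_trace ?r' r y) ?r' as"
    if "x \<in> invs Mn act r" "y \<in> invs Mn act r" for c x y
    using that relative_trace_linear[OF subgroup same_sum]
      beta_of_gamma_linear[OF relative_trace_in_invs[OF subgroup same_sum] relative_trace_in_invs[OF subgroup same_sum] l']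
    by (simp add: invs_def)
  show "\<beta>\<gamma> (orbit_sum c) r (rep q as) = \<beta>\<gamma> (relative_trace ?r' r (orbit_sum c)) ?r' as"
    if c: "c \<in> classes B act r" for c
  proof -
    obtain x0 where x0: "x0 \<in> B (sum_list r)" "c = orb act r x0" using c by (auto simp: classes_def)
    have c': "orb act ?r' x0 \<in> classes B act ?r'" using x0(1) same_sum by (auto simp: classes_def)
    show ?thesis
      using beta_of_gamma_on_orbit_sum[OF c lr] gamma_rep[OF gamma x0(1) q l]
        relative_trace_orbit_sum[OF subgroup same_sum x0(1)] x0(2)
        invs_linear_scale[OF vector_space beta_of_gamma_invs_linear[OF vector_space] orbit_sum_in_invs[OF c'] l']
        beta_of_gamma_on_orbit_sum[OF c' l'] by simp
  qed
qed

lemma beta_of_gamma_add_head: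
  assumes x: "x \<in> invs Mn act r" and l: "length (a1 # as) = length r"
  shows "\<beta>\<gamma> x r ((a0 + a1) # as) = (\<Sum>l\<in>{..hd r}. \<beta>\<gamma> x (l # (hd r - l) # tl r) (a0 # a1 # as))"
proof (rule linear_on_invs_eqI[OF vector_space x])
  have r: "r \<noteq> []" using l by auto
  have l2: "length ((a0 + a1) # as) = length r" using l by simp
  have ll: "length (a0 # a1 # as) = length (l # (hd r - l) # tl r)" for l using l r by (cases r) auto
  have split: "SigmaC (l # (hd r - l) # tl r) \<subseteq> SigmaC r" "sum_list (l # (hd r - l) # tl r) = sum_list r"
    if "l \<in> {..hd r}" for l
    using that SigmaC_split_head[OF r, of l] sum_list_split_head[OF r, of l] by simp_all
  have invs_split: "z \<in> invs Mn act (l # (hd r - l) # tl r)" if "l \<in> {..hd r}" "z \<in> invs Mn act r" for l z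
    using invs_mono[OF split[OF that(1)]] that(2) by blast
  show "\<beta>\<gamma> (sM c x + y) r ((a0 + a1) # as) = sA c (\<beta>\<gamma> x r ((a0 + a1) # as)) + \<beta>\<gamma> y r ((a0 + a1) # as)"
    if "x \<in> invs Mn act r" "y \<in> invs Mn act r" for c x y
    using beta_of_gamma_linear[OF that l2] .
  show "(\<Sum>l\<in>{..hd r}. \<beta>\<gamma> (sM c x + y) (l # (hd r - l) # tl r) (a0 # a1 # as)) =
      sA c (\<Sum>l\<in>{..hd r}. \<beta>\<gamma> x (l # (hd r - l) # tl r) (a0 # a1 # as)) +
      (\<Sum>l\<in>{..hd r}. \<beta>\<gamma> y (l # (hd r - l) # tl r) (a0 # a1 # as))"
    if "x \<in> invs Mn act r" "y \<in> invs Mn act r" for c x y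
    unfolding A.scale_sum_right sum.distrib[symmetric]
    using beta_of_gamma_linear[OF invs_split invs_split ll] that by (intro sum.cong refl) blast
  show "\<beta>\<gamma> (orbit_sum c) r ((a0 + a1) # as) =
      (\<Sum>l\<in>{..hd r}. \<beta>\<gamma> (orbit_sum c) (l # (hd r - l) # tl r) (a0 # a1 # as))"
    if c: "c \<in> classes B act r" for c
  proof -
    obtain x0 where x0: "x0 \<in> B (sum_list r)" "c = orb act r x0" using c by (auto simp: classes_def)
    have "\<beta>\<gamma> (orbit_sum c) r ((a0 + a1) # as) =
      (\<Sum>l\<in>{..hd r}. \<Sum>c'\<in>{orb act (l # (hd r - l) # tl r) y | y. y \<in> orb act r x0}.
        \<gamma> c' (l # (hd r - l) # tl r) (a0 # a1 # as))"
      using beta_of_gamma_on_orbit_sum[OF c l2] gamma_add_head[OF gamma x0(1) l] x0(2) by simp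
    also have "\<dots> = (\<Sum>l\<in>{..hd r}. \<beta>\<gamma> (orbit_sum c) (l # (hd r - l) # tl r) (a0 # a1 # as))"
      using beta_of_gamma_sum_subclasses[OF vector_space split x0(1) ll] x0(2) by (intro sum.cong refl) simp
    finally show ?thesis .
  qed
qed

lemma is_beta_beta_of_gamma: "is_beta sA sM Mn act \<beta>\<gamma>"
  unfolding is_beta_def relative_trace_def[symmetric]
  using beta_of_gamma_permute beta_of_gamma_Cons_0 beta_of_gamma_homogeneous beta_of_gamma_rep
    beta_of_gamma_add_head beta_of_gamma_linear
  by (intro conjI allI impI) (auto simp: beta_of_gamma_def)

lemma P_M_beta_of_gamma: "P_M B act \<beta>\<gamma> = \<gamma>"
proof (intro ext)
  fix c r as
  show "P_M B act \<beta>\<gamma> c r as = \<gamma> c r as"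
    using P_M_eq[of c B act r as \<beta>\<gamma>] beta_of_gamma_on_orbit_sum[of c r as] gamma_undefined[OF gamma, of c r as]
    by (cases "c \<in> classes B act r \<and> length as = length r") (auto simp: P_M_def)
qed

end

section \<open>The isomorphism of categories\<close>

lemma inj_on_P_M:
  assumes "vector_space sA"
  shows "inj_on (P_M B act) {\<beta>. is_beta sA sM Mn act \<beta>}"
proof (rule inj_onI, intro ext)
  fix \<beta> \<beta>' x r and as :: "'a list"
  assume beta: "\<beta> \<in> {\<beta>. is_beta sA sM Mn act \<beta>}" and beta': "\<beta>' \<in> {\<beta>. is_beta sA sM Mn act \<beta>}"
    and eq: "P_M B act \<beta> = P_M B act \<beta>'"
  show "\<beta> x r as = \<beta>' x r as"
  proof (cases "x \<in> invs Mn act r \<and> length as = length r")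
    case True
    then have x: "x \<in> invs Mn act r" and l: "length as = length r" by auto
    show ?thesis
    proof (rule linear_on_invs_eqI[OF assms x])
      show "\<beta> (sM c x + y) r as = sA c (\<beta> x r as) + \<beta> y r as"
        and "\<beta>' (sM c x + y) r as = sA c (\<beta>' x r as) + \<beta>' y r as"
        if "x \<in> invs Mn act r" "y \<in> invs Mn act r" for c x y
        using beta_linear[of sA \<beta>] beta_linear[of sA \<beta>'] beta beta' that l by auto
      show "\<beta> (orbit_sum c) r as = \<beta>' (orbit_sum c) r as" if "c \<in> classes B act r" for c
        using P_M_eq[OF that l, of \<beta>] P_M_eq[OF that l, of \<beta>'] eq by simp
    qed
  next
    case False
    have "\<beta> x r as = undefined" "\<beta>' x r as = undefined"
      using beta_undefined[OF _ False] beta beta' by auto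
    then show ?thesis by simp
  qed
qed

lemma bij_betw_P_M:
  assumes "vector_space sA"
  shows "bij_betw (P_M B act) {\<beta>. is_beta sA sM Mn act \<beta>} {\<gamma>. is_gamma sA B act \<gamma>}"
proof (rule bij_betw_imageI[OF inj_on_P_M[OF assms]])
  show "P_M B act ` {\<beta>. is_beta sA sM Mn act \<beta>} = {\<gamma>. is_gamma sA B act \<gamma>}"
    using is_gamma_P_M[OF assms] is_beta_beta_of_gamma[OF assms] P_M_beta_of_gamma[OF assms]
    by (auto intro: image_eqI[OF sym])
qed

lemma beta_hom_iff_gamma_hom:
  assumes vA: "vector_space sA" and vB: "vector_space sB"
    and beta: "is_beta sA sM Mn act \<beta>" and beta': "is_beta sB sM Mn act \<beta>'"
  shows "beta_hom sA sB Mn act \<beta> \<beta>' f \<longleftrightarrow> gamma_hom sA sB B act (P_M B act \<beta>) (P_M B act \<beta>') f"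
proof
  assume "beta_hom sA sB Mn act \<beta> \<beta>' f"
  then show "gamma_hom sA sB B act (P_M B act \<beta>) (P_M B act \<beta>') f"
    using orbit_sum_in_invs by (auto simp: beta_hom_def gamma_hom_def P_M_eq)
next
  assume hom: "gamma_hom sA sB B act (P_M B act \<beta>) (P_M B act \<beta>') f"
  then have f: "Vector_Spaces.linear sA sB f" by (simp add: gamma_hom_def)
  have "f (\<beta> x r as) = \<beta>' x r (map f as)" if x: "x \<in> invs Mn act r" and l: "length as = length r" for x r as
  proof (rule linear_on_invs_eqI[OF vB x])
    have lf: "length (map f as) = length r" using l by simp
    show "f (\<beta> (sM c x + y) r as) = sB c (f (\<beta> x r as)) + f (\<beta> y r as)"
      if "x \<in> invs Mn act r" "y \<in> invs Mn act r" for c x y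
      using beta_linear[OF beta that l] f by (simp add: linear_iff)
    show "\<beta>' (sM c x + y) r (map f as) = sB c (\<beta>' x r (map f as)) + \<beta>' y r (map f as)"
      if "x \<in> invs Mn act r" "y \<in> invs Mn act r" for c x y
      using beta_linear[OF beta' that lf] .
    show "f (\<beta> (orbit_sum c) r as) = \<beta>' (orbit_sum c) r (map f as)" if c: "c \<in> classes B act r" for c
    proof -
      have "f (P_M B act \<beta> c r as) = P_M B act \<beta>' c r (map f as)"
        using hom c l by (simp add: gamma_hom_def)
      then show ?thesis using P_M_eq[OF c l, of \<beta>] P_M_eq[OF c lf, of \<beta>'] by simp
    qed
  qed
  with f show "beta_hom sA sB Mn act \<beta> \<beta>' f" by (simp add: beta_hom_def)
qed

end

theorem proposition4p8:
  fixes sM :: "'f::field \<Rightarrow> 'v::ab_group_add \<Rightarrow> 'v"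
    and Mn B :: "nat \<Rightarrow> 'v set"
    and act :: "nat \<Rightarrow> (nat \<Rightarrow> nat) \<Rightarrow> 'v \<Rightarrow> 'v"
  assumes "sigma_module_basis sM Mn act B"
  shows "(\<forall>(sA :: 'f \<Rightarrow> 'a::ab_group_add \<Rightarrow> 'a) \<beta>.
            vector_space sA \<and> is_beta sA sM Mn act \<beta> \<longrightarrow> is_gamma sA B act (P_M B act \<beta>))
       \<and> (\<forall>sA :: 'f \<Rightarrow> 'a \<Rightarrow> 'a. vector_space sA \<longrightarrow>
            bij_betw (P_M B act) {\<beta>. is_beta sA sM Mn act \<beta>} {\<gamma>. is_gamma sA B act \<gamma>})
       \<and> (\<forall>(sA :: 'f \<Rightarrow> 'a \<Rightarrow> 'a) (sB :: 'f \<Rightarrow> 'b::ab_group_add \<Rightarrow> 'b) \<beta> \<beta>' f.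
            vector_space sA \<and> vector_space sB \<and> is_beta sA sM Mn act \<beta> \<and> is_beta sB sM Mn act \<beta>' \<longrightarrow>
            (beta_hom sA sB Mn act \<beta> \<beta>' f \<longleftrightarrow> gamma_hom sA sB B act (P_M B act \<beta>) (P_M B act \<beta>') f))"
proof -
  interpret sigma_module sM Mn B act by (rule sigma_module.intro) fact
  show ?thesis
    by (intro conjI allI impI) (auto intro: is_gamma_P_M bij_betw_P_M simp: beta_hom_iff_gamma_hom)
qed

end
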